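(* Let $Q$ be a nonzero quadratic form on $\mathbb{F}_{q_1}/\mathbb{F}_q$ with rank $r_Q$, and let \[\mathcal{C}_Q'=\{(aQ(x)+\mathrm{Tr}_{q_2/q}(by)+c)_{(x,y)\in\mathbb{F}} : (a,b,c)\in\mathbb{F}_q\times\mathbb{F}_{q_2}\times\mathbb{F}_q\}.\] (1) If $r_Q$ is even, then $\mathcal{C}_Q'$ is a $[q^M,\,m_2+2]_q$ linear code with weight distribution: weight $0$ (frequency $1$); $q^M$ (frequency $q-1$); $q^{M-1}(q-1)$ (frequency $q^2(q^{m_2}-1)$); $q^{M-1}(q-1)(1-\epsilon q^{-r_Q/2})$ (frequency $q-1$); $q^{M-1}(q-1+\epsilon q^{-r_Q/2})$ (frequency $(q-1)^2$). Its complete weight enumerator is \[\sum_{i=0}^{q-1}\omega_i^{q^M}+q^2(q^{m_2}-1)\prod_{\rho=0}^{q-1}\omega_\rho^{q^{M-1}}+\sum_{i=0}^{q-1}(q-1)\,\omega_i^{t_1}\prod_{\rho=0,\rho\neq i}^{q-1}\omega_\rho^{t_2},\] where $t_1=q^{M-1}(1+\epsilon(q-1)q^{-r_Q/2})$ and $t_2=q^{M-1}(1-\epsilon q^{-r_Q/2})$. (2) If $r_Q$ is odd, then $\mathcal{C}_Q'$ is a $[q^M,\,m_2+2]_q$ linear code with weight distribution: weight $0$ (frequency $1$); $q^M$ (frequency $q-1$); $q^{M-1}(q-1)$ (frequency $q^2(q^{m_2}-1)+q-1$); $q^{M-1}(q-1-\epsilon q^{(1-r_Q)/2})$ (frequency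 $\frac12(q-1)^2$); $q^{M-1}(q-1+\epsilon q^{(1-r_Q)/2})$ (frequency $\frac12(q-1)^2$). Its complete weight enumerator is \[\sum_{i=0}^{q-1}\omega_i^{q^M}+q^2(q^{m_2}-1)\prod_{\rho=0}^{q-1}\omega_\rho^{q^{M-1}}+\sum_{i=0}^{q-1}\frac{q-1}{2}\,\omega_i^{q^{M-1}}\prod_{\rho=0,\rho\ne i}^{q-1}\omega_\rho^{k_1}+\sum_{i=0}^{q-1}\frac{q-1}{2}\,\omega_i^{q^{M-1}}\prod_{\rho=0,\rho\ne i}^{q-1}\omega_\rho^{k_2},\] where $k_1=q^{M-1}(1+\epsilon q^{(1-r_Q)/2}\eta(\omega_i-\omega_\rho))$ and $k_2=q^{M-1}(1-\epsilon q^{(1-r_Q)/2}\eta(\omega_i-\omega_\rho))$.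
   Context: Let $p$ be an odd prime, $m\ge1$, $q=p^m$. Let $m_1,m_2$ be positive integers, $M=m_1+m_2$, $q_i=q^{m_i}$, $\mathbb{F}=\mathbb{F}_{q_1}\times\mathbb{F}_{q_2}$; coordinates are indexed by $\mathbb{F}$ in a fixed order. $\mathrm{Tr}_{q^s/q}$ is the trace $\mathbb{F}_{q^s}\to\mathbb{F}_q$; $\eta$ is the quadratic character of $\mathbb{F}_q$ with $\eta(0)=0$. A quadratic form $Q$ on $\mathbb{F}_{q_1}/\mathbb{F}_q$ is a map $Q:\mathbb{F}_{q_1}\to\mathbb{F}_q$ with $Q(ax)=a^2Q(x)$ ($a\in\mathbb{F}_q$) such that $B_Q(x,y)=\frac12(Q(x+y)-Q(x)-Q(y))$ is $\mathbb{F}_q$-bilinear; its rank is $r_Q=m_1-\dim_{\mathbb{F}_q}\{x:B_Q(x,y)=0\ \forall y\}$. In suitable coordinates $Q=\sum_{i=1}^{r_Q}\lambda_ix_i^2$ with $\lambda_i\in\mathbb{F}_q^*$; $\varepsilon_Q=\eta(\lambda_1\cdots\lambda_{r_Q})$. Set $\epsilon=\varepsilon_Q(-1)^{(p-1)mr_Q/4}$ if $r_Q$ even, $\epsilon=\varepsilon_Q(-1)^{(p-1)m(r_Q+1)/4}$ if $r_Q$ odd. Complete weight enumerator: list $\mathbb{F}_q=\{\omega_0=0,\omega_1,\dots,\omega_{q-1}\}$; for $c\in\mathbb{F}_q^n$, $\omega[c]=\prod_j\omega_j^{k_j}$ (formal monomial), $k_j$ the number of coordinates of $c$ equal to $\omega_j$;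 the complete weight enumerator of $\mathcal{C}$ is $\sum_{c\in\mathcal{C}}\omega[c]$. *)

theory Defs
  imports Complex_Main "HOL-Library.Function_Algebras" "HOL-Library.Multiset" "HOL-Library.Cardinality" "HOL-Computational_Algebra.Primes"
begin

definition field_emb :: "('k::field \<Rightarrow> 'a::field) \<Rightarrow> bool" where
  "field_emb e \<longleftrightarrow> (\<forall>x y. e (x + y) = e x + e y) \<and> (\<forall>x y. e (x * y) = e x * e y) \<and> e 1 = 1"

text \<open>Trace Tr_{q^s/q}(y) = y + y^q + ... + y^(q^(s-1)), pulled back to the base field via e.\<close>
definition tr :: "('k::field \<Rightarrow> 'a::field) \<Rightarrow> nat \<Rightarrow> nat \<Rightarrow> 'a \<Rightarrow> 'k" where
  "tr e q s y = the_inv e (\<Sum>j<s. y ^ (q ^ j))"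

definition qchar :: "'k::field \<Rightarrow> int" where
  "qchar x = (if x = 0 then 0 else if (\<exists>y. y ^ 2 = x) then 1 else -1)"

definition bform :: "('a::field \<Rightarrow> 'k::field) \<Rightarrow> 'a \<Rightarrow> 'a \<Rightarrow> 'k" where
  "bform Q x y = (Q (x + y) - Q x - Q y) / 2"

definition quad_form :: "('k::field \<Rightarrow> 'a::field) \<Rightarrow> ('a \<Rightarrow> 'k) \<Rightarrow> bool" where
  "quad_form e Q \<longleftrightarrow>
     (\<forall>a x. Q (e a * x) = a ^ 2 * Q x) \<and>
     (\<forall>x x' y. bform Q (x + x') y = bform Q x y + bform Q x' y) \<and>
     (\<forall>a x y. bform Q (e a * x) y = a * bform Q x y) \<and>
     (\<forall>x y y'. bform Q x (y + y') = bform Q x y + bform Q x y') \<and>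
     (\<forall>a x y. bform Q x (e a * y) = a * bform Q x y)"

definition qf_rank :: "('k::field \<Rightarrow> 'a::field) \<Rightarrow> nat \<Rightarrow> ('a \<Rightarrow> 'k) \<Rightarrow> nat" where
  "qf_rank e m1 Q = m1 - vector_space.dim (\<lambda>a x. e a * x) {x. \<forall>y. bform Q x y = 0}"

text \<open>epsilon_Q = eta(lambda_1 ... lambda_r) where, in suitable coordinates (an F_q-basis
  v_0..v_{m1-1}), Q = sum_{i<r} lambda_i x_i^2.\<close>
definition qf_eps :: "('k::field \<Rightarrow> 'a::field) \<Rightarrow> nat \<Rightarrow> ('a \<Rightarrow> 'k) \<Rightarrow> int" where
  "qf_eps e m1 Q = (SOME \<epsilon>. \<exists>(v::nat \<Rightarrow> 'a) (lam::nat \<Rightarrow> 'k).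
      (\<forall>x::nat \<Rightarrow> 'k. (\<Sum>i<m1. e (x i) * v i) = 0 \<longrightarrow> (\<forall>i<m1. x i = 0)) \<and>
      (\<forall>i<qf_rank e m1 Q. lam i \<noteq> 0) \<and>
      (\<forall>x::nat \<Rightarrow> 'k. Q (\<Sum>i<m1. e (x i) * v i) = (\<Sum>i<qf_rank e m1 Q. lam i * (x i) ^ 2)) \<and>
      \<epsilon> = qchar (\<Prod>i<qf_rank e m1 Q. lam i))"

definition sgn_eps :: "nat \<Rightarrow> nat \<Rightarrow> ('k::field \<Rightarrow> 'a::field) \<Rightarrow> nat \<Rightarrow> ('a \<Rightarrow> 'k) \<Rightarrow> int" where
  "sgn_eps p m e m1 Q =
     (let r = qf_rank e m1 Q in
      if even r then qf_eps e m1 Q * (-1) ^ ((p - 1) * m * r div 4)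
      else qf_eps e m1 Q * (-1) ^ ((p - 1) * m * (r + 1) div 4))"

text \<open>The code C'_Q; codewords are vectors indexed by F = F_{q1} x F_{q2}.\<close>
definition codeQ :: "('k::field \<Rightarrow> 'b::field) \<Rightarrow> nat \<Rightarrow> nat \<Rightarrow> ('a \<Rightarrow> 'k) \<Rightarrow> ('a \<times> 'b \<Rightarrow> 'k) set" where
  "codeQ e2 q m2 Q = {(\<lambda>(x, y). a * Q x + tr e2 q m2 (b * y) + c) | a b c. True}"

definition hweight :: "('i \<Rightarrow> 'k::zero) \<Rightarrow> nat" where
  "hweight c = card {z. c z \<noteq> 0}"

text \<open>Complete weight enumerator: the multiset of monomials omega[c], each monomial being
  represented by its exponent vector (omega \<mapsto> number of coordinates equal to omega);
  the multiplicity of a monomial is its coefficient.\<close>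
definition cwe :: "('i \<Rightarrow> 'k) set \<Rightarrow> ('k \<Rightarrow> real) multiset" where
  "cwe C = image_mset (\<lambda>c w. real (card {z. c z = w})) (mset_set C)"

definition wdist :: "('i \<Rightarrow> 'k::zero) set \<Rightarrow> real multiset" where
  "wdist C = image_mset (\<lambda>c. real (hweight c)) (mset_set C)"

end

(* For a = b = 0 the word is constant.  For b <> 0 the
   map y |-> Tr(b y) is a nonzero F_q-linear functional, so it takes every value q^(m2-1) times and
   the word is balanced.  For b = 0 and a <> 0 the value distribution is that of the level sets of
   Q.  Diagonalising Q by an orthogonal basis whose tail spans the radical reduces these to counts
   of solutions of lam_1 x_1^2 + ... + lam_r x_r^2 = t, which follow by induction on r from the
   character sums of the quadratic character eta, in particular the Jacobsthal sum
   sum_s eta(s) eta(t - s) = -eta(-1) for t <> 0.  The complete weight enumerator is the multiset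
   of value-count vectors of the codewords, and the weight distribution is its image under
   v |-> q^M - v(0). *)

theory Submission
  imports Defs "HOL-Computational_Algebra.Polynomial" "HOL-Library.FuncSet"
begin

section \<open>Finite fields\<close>

(* The library proves these facts for the type class finite_field only; here fields are merely
   of sort {finite, field}. *)

lemma finite_field_power_card_minus_one:
  fixes x :: "'k::{finite,field}"
  assumes "x \<noteq> 0"
  shows "x ^ (CARD('k) - 1) = 1"
proof -
  let ?U = "UNIV - {0::'k}"
  have "(\<Prod>y\<in>?U. x * y) = (\<Prod>y\<in>?U. y)"
    by (rule prod.reindex_bij_witness[of _ "\<lambda>y. y / x" "\<lambda>y. x * y"]) (use assms in auto)
  moreover have "(\<Prod>y\<in>?U. x * y) = x ^ card ?U * (\<Prod>y\<in>?U. y)"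
    by (simp add: prod.distrib)
  moreover have "(\<Prod>y\<in>?U. y) \<noteq> 0"
    by simp
  ultimately show ?thesis
    by (simp add: card_Diff_singleton)
qed

lemma finite_field_power_card: "(x::'k::{finite,field}) ^ CARD('k) = x"
proof (cases "x = 0")
  case False
  have "x ^ CARD('k) = x * x ^ (CARD('k) - 1)"
    by (simp flip: power_Suc)
  with finite_field_power_card_minus_one[OF False] show ?thesis
    by simp
qed simp

lemma finite_field_power_card_power: "(x::'k::{finite,field}) ^ (CARD('k) ^ n) = x"
  by (induction n) (simp_all add: finite_field_power_card power_mult)

lemma finite_field_of_nat_card: "of_nat CARD('k) = (0::'k::{finite,field})"
proof -
  have "(\<Sum>x\<in>UNIV. x + 1) = (\<Sum>x\<in>UNIV. x::'k)"
    by (rule sum.reindex_bij_witness[of _ "\<lambda>y. y - 1" "\<lambda>y. y + 1"]) auto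
  then show ?thesis
    by (simp add: sum.distrib)
qed

lemma finite_field_card_gt_one: "CARD('k::{finite,field}) > 1"
proof -
  have "card {0::'k, 1} \<le> CARD('k)"
    by (rule card_mono) auto
  then show ?thesis
    by simp
qed

lemma CHAR_finite_field:
  assumes "prime p" and "CARD('k::{finite,field}) = p ^ m"
  shows "CHAR('k) = p"
proof -
  have "prime CHAR('k)"
    by (simp add: finite_imp_CHAR_pos prime_CHAR_semidom)
  moreover have "CHAR('k) dvd p ^ m"
    using finite_field_of_nat_card[where 'k = 'k] assms(2) by (simp only: of_nat_eq_0_iff_char_dvd)
  ultimately show ?thesis
    using assms(1) by (meson prime_dvd_power primes_dvd_imp_eq)
qed

lemma two_neq_zero_if_odd_CHAR:
  assumes "odd CHAR('a::semiring_1)"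
  shows "(2::'a) \<noteq> 0"
proof
  assume "(2::'a) = 0"
  then have "CHAR('a) dvd 2"
    using of_nat_eq_0_iff_char_dvd[of 2, where 'a = 'a] by simp
  with assms have "CHAR('a) = 1"
    using dvd_imp_le[of "CHAR('a)" 2] by (cases "CHAR('a)") (auto simp: numeral_2_eq_2 le_Suc_eq)
  then show False
    using of_nat_CHAR[where 'a = 'a] by simp
qed

lemma card_power_eq_poly_le:
  fixes R :: "'k::field poly"
  assumes "degree R < n"
  shows "card {x. x ^ n = poly R x} \<le> n"
proof -
  let ?P = "monom 1 n - R"
  have "degree ?P = n"
    using assms degree_add_eq_left[of "- R" "monom 1 n"] by (simp add: degree_monom_eq)
  moreover have "{x. poly ?P x = 0} = {x. x ^ n = poly R x}"
    by (simp add: poly_monom)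
  ultimately show ?thesis
    using card_poly_roots_bound[of ?P] assms by fastforce
qed

section \<open>The quadratic character\<close>

lemma qchar_0 [simp]: "qchar 0 = 0"
  by (simp add: qchar_def)

lemma qchar_1 [simp]: "qchar 1 = 1"
  by (auto simp: qchar_def intro: exI[of _ 1])

lemma qchar_square: "y \<noteq> 0 \<Longrightarrow> qchar (y ^ 2) = 1"
  by (auto simp: qchar_def)

lemma qchar_nonzero: "x \<noteq> 0 \<Longrightarrow> qchar x = 1 \<or> qchar x = -1"
  by (simp add: qchar_def)

lemma sum_over_squares:
  fixes g :: "'k::{finite,field} \<Rightarrow> 'r::comm_semiring_1"
  shows "(\<Sum>y\<in>UNIV. g (y ^ 2)) = (\<Sum>s\<in>UNIV. of_nat (card {y. y ^ 2 = s}) * g s)"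
proof -
  have "(\<Sum>y\<in>UNIV. g (y ^ 2)) = (\<Sum>s\<in>UNIV. \<Sum>y\<in>{y. y \<in> UNIV \<and> y ^ 2 = s}. g (y ^ 2))"
    by (rule sum.group[symmetric]) auto
  then show ?thesis
    by simp
qed

context
  assumes two_neq_zero: "(2::'k::{finite,field}) \<noteq> 0"
begin

lemma card_square_roots: "int (card {y::'k. y ^ 2 = s}) = 1 + qchar s"
proof (cases "\<exists>y. y ^ 2 = s \<and> y \<noteq> 0")
  case True
  then obtain y where y: "y ^ 2 = s" "y \<noteq> 0"
    by blast
  have "{z. z ^ 2 = s} = {y, -y}"
    unfolding y(1)[symmetric] by (auto simp: power2_eq_iff)
  moreover have "y \<noteq> -y"
  proof
    assume "y = -y"
    then have "2 * y = 0"
      by (metis add.right_inverse mult_2)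
    with y two_neq_zero show False
      by simp
  qed
  ultimately show ?thesis
    using y qchar_square[OF y(2)] by simp
next
  case False
  then have "{y::'k. y ^ 2 = s} = (if s = 0 then {0} else {})"
    by auto
  moreover have "qchar s = (if s = 0 then 0 else -1)"
    using False by (auto simp: qchar_def)
  ultimately show ?thesis
    by simp
qed

lemma sum_qchar: "(\<Sum>s\<in>UNIV. qchar (s::'k)) = 0"
proof -
  have "int CARD('k) = (\<Sum>s\<in>UNIV. int (card {y::'k. y ^ 2 = s}))"
    using sum_over_squares[of "\<lambda>_. 1::int"] by simp
  also have "\<dots> = (\<Sum>s\<in>UNIV. 1 + qchar (s::'k))"
    by (simp only: card_square_roots)
  finally show ?thesis
    by (simp add: sum.distrib)
qed

lemma card_qchar_eq:
  "card {s::'k. qchar s = 1} = (CARD('k) - 1) div 2"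
  "card {s::'k. qchar s = -1} = (CARD('k) - 1) div 2"
  "odd CARD('k)"
proof -
  let ?S = "{s::'k. qchar s = 1}" and ?N = "{s::'k. qchar s = -1}"
  have UNIV_split: "UNIV = insert 0 (?S \<union> ?N)"
    using qchar_nonzero by auto
  have disjoint: "?S \<inter> ?N = {}"
    by auto
  have "CARD('k) = Suc (card ?S + card ?N)"
    by (subst UNIV_split) (simp add: card_Un_disjoint disjoint)
  moreover have "int (card ?S) - int (card ?N) = 0"
  proof -
    have "(\<Sum>s\<in>?S. qchar s) = (\<Sum>s\<in>?S. 1)" "(\<Sum>s\<in>?N. qchar s) = (\<Sum>s\<in>?N. -1)"
      by (rule sum.cong; simp)+
    moreover have "(\<Sum>s\<in>insert 0 (?S \<union> ?N). qchar s) = 0"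
      using sum_qchar UNIV_split by metis
    ultimately show ?thesis
      by (simp add: sum.union_disjoint disjoint)
  qed
  ultimately show "card ?S = (CARD('k) - 1) div 2" "card ?N = (CARD('k) - 1) div 2" "odd CARD('k)"
    by simp_all
qed

lemma qchar_Euler_criterion:
  fixes x :: 'k
  assumes "x \<noteq> 0"
  shows "x ^ ((CARD('k) - 1) div 2) = of_int (qchar x)"
proof -
  obtain h where card_eq: "CARD('k) = 2 * h + 1"
    using card_qchar_eq(3) by (rule oddE)
  have h_pos: "h \<ge> 1"
    using finite_field_card_gt_one[where 'k = 'k] card_eq by simp
  have power_2h: "z ^ (2 * h) = 1" if "z \<noteq> 0" for z :: 'k
    using finite_field_power_card_minus_one[OF that] card_eq by simp
  have "{s::'k. qchar s = 1} \<subseteq> {s. s ^ h = 1}"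
  proof
    fix s :: 'k assume "s \<in> {s. qchar s = 1}"
    then obtain y where "y ^ 2 = s" "y \<noteq> 0"
      by (auto simp: qchar_def split: if_splits)
    then show "s \<in> {s. s ^ h = 1}"
      using power_2h[of y] by (simp add: power_mult)
  qed
  moreover have "card {s::'k. s ^ h = 1} \<le> h"
    using card_power_eq_poly_le[of "[:1:]" h] h_pos by simp
  ultimately have squares_eq_roots: "{s::'k. qchar s = 1} = {s. s ^ h = 1}"
    using card_qchar_eq(1) card_eq by (intro card_seteq) simp_all
  have "(x ^ h) ^ 2 = 1"
    using power_2h[OF assms] by (simp only: power_mult[symmetric] mult.commute[of h 2])
  then have "x ^ h = 1 \<or> x ^ h = -1"
    by (simp add: power2_eq_1_iff)
  moreover have "qchar x = 1 \<longleftrightarrow> x ^ h = 1"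
    using squares_eq_roots by blast
  ultimately show ?thesis
    using qchar_nonzero[OF assms] card_eq by auto
qed

lemma qchar_eqI:
  fixes x :: 'k
  assumes "x \<noteq> 0" and "\<epsilon> = 1 \<or> \<epsilon> = -1"
    and "x ^ ((CARD('k) - 1) div 2) = of_int \<epsilon>"
  shows "qchar x = \<epsilon>"
proof -
  have "(1::'k) \<noteq> -1"
    using two_neq_zero by (metis one_add_one add.right_inverse)
  then show ?thesis
    using assms qchar_Euler_criterion[OF assms(1)] qchar_nonzero[OF assms(1)] by auto
qed

lemma qchar_mult: "qchar (x * y :: 'k) = qchar x * qchar y"
proof (cases "x = 0 \<or> y = 0")
  case False
  then have "(x * y) ^ ((CARD('k) - 1) div 2) = of_int (qchar x * qchar y)"
    using qchar_Euler_criterion[of x] qchar_Euler_criterion[of y] by (simp add: power_mult_distrib)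
  with False show ?thesis
    using qchar_nonzero[of x] qchar_nonzero[of y] by (intro qchar_eqI) auto
qed auto

lemma qchar_divide: "qchar (x / y :: 'k) = qchar x * qchar y"
proof (cases "y = 0")
  case False
  have "qchar (x / y) * qchar y ^ 2 = qchar x * qchar y"
    using False by (simp add: power2_eq_square mult.assoc flip: qchar_mult)
  moreover have "qchar y ^ 2 = 1"
    using qchar_nonzero[OF False] by auto
  ultimately show ?thesis
    by simp
qed simp

lemma qchar_minus_one: "qchar (-1::'k) = (-1) ^ ((CARD('k) - 1) div 2)"
  by (rule qchar_eqI) (auto simp: minus_one_power_iff)

lemma sum_qchar_affine:
  assumes "a \<noteq> 0"
  shows "(\<Sum>s\<in>UNIV. qchar (a * s + t :: 'k)) = 0"
proof -
  have "(\<Sum>s\<in>UNIV. qchar (a * s + t)) = (\<Sum>s\<in>UNIV. qchar (s::'k))"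
    by (rule sum.reindex_bij_witness[of _ "\<lambda>s. (s - t) / a" "\<lambda>s. a * s + t"]) (use assms in auto)
  then show ?thesis
    by (simp add: sum_qchar)
qed

lemma sum_qchar_scaled: "(\<Sum>s\<in>UNIV. qchar (a * s :: 'k)) = 0"
  using sum_qchar_affine[of a 0] by (cases "a = 0") simp_all

lemma sum_qchar_diff: "(\<Sum>s\<in>UNIV. qchar (t - s :: 'k)) = 0"
  using sum_qchar_affine[of "-1" t] by simp

lemma qchar_Jacobsthal:
  "(\<Sum>s\<in>UNIV. qchar s * qchar (t - s :: 'k)) =
     qchar (-1::'k) * (if t = 0 then int CARD('k) - 1 else -1)"
proof -
  have "qchar s * qchar (t - s) = (if s = 0 then 0 else qchar (t / s - 1))" for s
  proof (cases "s = 0")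
    case False
    then have "s * (t - s) = s ^ 2 * (t / s - 1)"
      by (simp add: field_simps power2_eq_square)
    then have "qchar s * qchar (t - s) = qchar (s ^ 2) * qchar (t / s - 1)"
      by (simp only: qchar_mult [symmetric])
    with False show ?thesis
      by (simp add: qchar_square)
  qed simp
  then have "(\<Sum>s\<in>UNIV. qchar s * qchar (t - s)) = (\<Sum>s\<in>UNIV - {0}. qchar (t / s - 1))"
    by (simp add: sum.remove[of UNIV 0])
  also have "\<dots> = qchar (-1::'k) * (if t = 0 then int CARD('k) - 1 else -1)"
  proof (cases "t = 0")
    case True
    then show ?thesis
      by (simp add: card_Diff_singleton)
  next
    case False
    have "(\<Sum>s\<in>UNIV - {0}. qchar (t / s - 1)) = (\<Sum>u\<in>UNIV - {-1::'k}. qchar u)"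
      by (rule sum.reindex_bij_witness[of _ "\<lambda>u. t / (u + 1)" "\<lambda>s. t / s - 1"])
        (use False in \<open>auto simp: eq_neg_iff_add_eq_0\<close>)
    also have "\<dots> = - qchar (-1::'k)"
      using sum_qchar by (simp add: sum_diff1)
    finally show ?thesis
      using False by simp
  qed
  finally show ?thesis .
qed

lemma sum_scaled_squares:
  fixes g :: "'k \<Rightarrow> real"
  assumes "l \<noteq> 0"
  shows "(\<Sum>y\<in>UNIV. g (l * y ^ 2)) = (\<Sum>s\<in>UNIV. g s * (1 + of_int (qchar (l * s))))"
proof -
  have card_roots: "real (card {y::'k. y ^ 2 = s}) = 1 + of_int (qchar s)" for s
    using arg_cong[OF card_square_roots[of s], of real_of_int] by simp
  have "(\<Sum>y\<in>UNIV. g (l * y ^ 2)) = (\<Sum>s\<in>UNIV. (1 + of_int (qchar s)) * g (l * s))"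
    by (simp only: sum_over_squares[of "\<lambda>s. g (l * s)"] card_roots)
  also have "\<dots> = (\<Sum>s\<in>UNIV. g s * (1 + of_int (qchar (l * s))))"
  proof (rule sum.reindex_bij_witness[of _ "\<lambda>s. s / l" "\<lambda>s. l * s"])
    fix s :: 'k
    have "qchar (l * (l * s)) = qchar (l ^ 2) * qchar s"
      by (simp only: qchar_mult power2_eq_square mult.assoc)
    then show "g (l * s) * (1 + of_int (qchar (l * (l * s)))) = (1 + of_int (qchar s)) * g (l * s)"
      using assms by (simp add: qchar_square)
  qed (use assms in auto)
  finally show ?thesis .
qed

end

section \<open>Diagonal quadratic equations\<close>

definition diag_count :: "(nat \<Rightarrow> 'k::{finite,field}) \<Rightarrow> nat \<Rightarrow> 'k \<Rightarrow> nat" where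
  "diag_count lam n t = card {x \<in> {..<n} \<rightarrow>\<^sub>E UNIV. (\<Sum>i<n. lam i * x i ^ 2) = t}"

lemma diag_count_0: "diag_count lam 0 t = (if t = 0 then 1 else 0)"
  by (simp add: diag_count_def)

lemma diag_count_Suc:
  fixes lam :: "nat \<Rightarrow> 'k::{finite,field}"
  shows "diag_count lam (Suc n) t = (\<Sum>y\<in>UNIV. diag_count lam n (t - lam n * y ^ 2))"
proof -
  let ?ext = "\<lambda>(y, g). g(n := y)"
  let ?A = "SIGMA y:UNIV. {g \<in> {..<n} \<rightarrow>\<^sub>E UNIV. (\<Sum>i<n. lam i * g i ^ 2) = t - lam n * y ^ 2}"
  have sum_ext: "(\<Sum>i<n. lam i * (g(n := y)) i ^ 2) = (\<Sum>i<n. lam i * g i ^ 2)" for g and y :: 'k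
    by (rule sum.cong) auto
  have "diag_count lam (Suc n) t = card (?ext ` ?A)"
    unfolding diag_count_def lessThan_Suc PiE_insert_eq
    by (rule arg_cong[where f = card]) (force simp: sum_ext eq_diff_eq)
  also have "\<dots> = card ?A"
    by (rule card_image, rule inj_on_subset[OF inj_combinator[of n "{..<n}" "\<lambda>_. UNIV"]]) auto
  finally show ?thesis
    by (simp add: diag_count_def finite_PiE)
qed

lemma diag_count_zero_coeffs:
  assumes "r \<le> n" and "\<And>i. r \<le> i \<Longrightarrow> i < n \<Longrightarrow> lam i = 0"
  shows "diag_count lam n t = CARD('k) ^ (n - r) * diag_count (lam :: nat \<Rightarrow> 'k::{finite,field}) r t"
  using assms
proof (induction n)
  case (Suc n)
  show ?case
  proof (cases "r = Suc n")
    case False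
    with Suc.prems have "r \<le> n" and "lam n = 0"
      by auto
    then show ?thesis
      using Suc by (simp add: diag_count_Suc Suc_diff_le)
  qed simp
qed simp

context
  assumes two_neq_zero: "(2::'k::{finite,field}) \<noteq> 0"
begin

lemma sum_one_plus_qchar_scaled:
  "(\<Sum>s\<in>UNIV. 1 + real_of_int (qchar (l * s :: 'k))) = real CARD('k)"
  using sum_qchar_scaled[OF two_neq_zero, of l] by (simp add: sum.distrib flip: of_int_sum)

lemma diag_count_step_from_even:
  fixes lam :: "nat \<Rightarrow> 'k"
  assumes "even r" and "lam r \<noteq> 0"
    and even_law: "\<And>u. real CARD('k) * real (diag_count lam r u) =
      real CARD('k) ^ r + E * real CARD('k) ^ (r div 2) * (if u = 0 then real CARD('k) - 1 else -1)"
  shows "real (diag_count lam (Suc r) t) =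
    real CARD('k) ^ r + E * of_int (qchar (lam r)) * real CARD('k) ^ (r div 2) * of_int (qchar t)"
proof -
  let ?q = "real CARD('k)" and ?l = "lam r"
  define A where "A = (?q ^ r - E * ?q ^ (r div 2)) / ?q"
  have q_pos: "?q > 0"
    by simp
  have count_eq: "real (diag_count lam r u) = A + (if u = 0 then E * ?q ^ (r div 2) else 0)" for u
    using even_law[of u] q_pos unfolding A_def by (simp add: field_simps)
  have "real (diag_count lam (Suc r) t) = (\<Sum>s\<in>UNIV. real (diag_count lam r (t - s)) * (1 + of_int (qchar (?l * s))))"
    using sum_scaled_squares[OF two_neq_zero assms(2), of "\<lambda>s. real (diag_count lam r (t - s))"]
    by (simp add: diag_count_Suc)
  also have "\<dots> = (\<Sum>s\<in>UNIV. A * (1 + of_int (qchar (?l * s))) +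
      (if s = t then E * ?q ^ (r div 2) * (1 + of_int (qchar (?l * t))) else 0))"
    by (rule sum.cong) (auto simp: count_eq algebra_simps)
  also have "\<dots> = A * (\<Sum>s\<in>UNIV. 1 + of_int (qchar (?l * s))) + E * ?q ^ (r div 2) * (1 + of_int (qchar (?l * t)))"
    by (simp only: sum.distrib sum_distrib_left[symmetric]) simp
  also have "\<dots> = A * ?q + E * ?q ^ (r div 2) * (1 + of_int (qchar (?l * t)))"
    by (simp only: sum_one_plus_qchar_scaled)
  also have "\<dots> = ?q ^ r + E * of_int (qchar ?l) * ?q ^ (r div 2) * of_int (qchar t)"
    using q_pos unfolding A_def by (simp add: field_simps qchar_mult[OF two_neq_zero])
  finally show ?thesis .
qed

lemma diag_count_step_from_odd:
  fixes lam :: "nat \<Rightarrow> 'k"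
  assumes "odd r" and "lam r \<noteq> 0"
    and odd_law: "\<And>u. real (diag_count lam r u) =
      real CARD('k) ^ (r - 1) + F * real CARD('k) ^ (r div 2) * of_int (qchar u)"
  shows "real CARD('k) * real (diag_count lam (Suc r) t) =
    real CARD('k) ^ Suc r + F * of_int (qchar (lam r) * qchar (-1::'k)) * real CARD('k) ^ (Suc r div 2) *
      (if t = 0 then real CARD('k) - 1 else -1)"
proof -
  let ?q = "real CARD('k)" and ?l = "lam r"
  obtain k where r: "r = 2 * k + 1"
    using \<open>odd r\<close> by (rule oddE)
  have count_eq: "real (diag_count lam r u) = ?q ^ (2 * k) + F * ?q ^ k * of_int (qchar u)" for u
    using odd_law[of u] r by simp
  have "real (diag_count lam (Suc r) t) = (\<Sum>s\<in>UNIV. real (diag_count lam r (t - s)) * (1 + of_int (qchar (?l * s))))"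
    using sum_scaled_squares[OF two_neq_zero assms(2), of "\<lambda>s. real (diag_count lam r (t - s))"]
    by (simp add: diag_count_Suc)
  also have "\<dots> = (\<Sum>s\<in>UNIV. ?q ^ (2 * k) * (1 + of_int (qchar (?l * s))) +
      F * ?q ^ k * of_int (qchar (t - s)) +
      F * ?q ^ k * of_int (qchar ?l) * of_int (qchar s * qchar (t - s)))"
    by (rule sum.cong) (simp_all add: count_eq qchar_mult[OF two_neq_zero] algebra_simps)
  also have "\<dots> = ?q ^ (2 * k) * (\<Sum>s\<in>UNIV. 1 + of_int (qchar (?l * s))) +
      F * ?q ^ k * of_int (\<Sum>s\<in>UNIV. qchar (t - s)) +
      F * ?q ^ k * of_int (qchar ?l) * of_int (\<Sum>s\<in>UNIV. qchar s * qchar (t - s))"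
    by (simp only: sum.distrib of_int_sum sum_distrib_left[symmetric])
  also have "\<dots> = ?q ^ (2 * k) * ?q + F * ?q ^ k * of_int (qchar ?l) *
      of_int (qchar (-1::'k) * (if t = 0 then int CARD('k) - 1 else -1))"
    by (simp add: sum_one_plus_qchar_scaled sum_qchar_diff[OF two_neq_zero] qchar_Jacobsthal[OF two_neq_zero])
  finally show ?thesis
    by (simp add: r algebra_simps)
qed

lemma diag_count_closed_form:
  fixes lam :: "nat \<Rightarrow> 'k"
  assumes "\<forall>i<r. lam i \<noteq> 0"
  defines "\<sigma> \<equiv> real_of_int (qchar (-1::'k) ^ (r div 2) * qchar (\<Prod>i<r. lam i))"
  shows "(even r \<longrightarrow> (\<forall>t. real CARD('k) * real (diag_count lam r t) =
            real CARD('k) ^ r + \<sigma> * real CARD('k) ^ (r div 2) * (if t = 0 then real CARD('k) - 1 else -1))) \<and>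
         (odd r \<longrightarrow> (\<forall>t. real (diag_count lam r t) =
            real CARD('k) ^ (r - 1) + \<sigma> * real CARD('k) ^ (r div 2) * of_int (qchar t)))"
  using assms(1) unfolding \<sigma>_def
proof (induction r)
  case 0
  show ?case
    by (simp add: diag_count_0)
next
  case (Suc r)
  have lam_r: "lam r \<noteq> 0"
    using Suc.prems by simp
  have "\<forall>i<r. lam i \<noteq> 0"
    using Suc.prems by simp
  note IH = Suc.IH[OF this]
  let ?\<sigma> = "\<lambda>n. real_of_int (qchar (-1::'k) ^ (n div 2) * qchar (\<Prod>i<n. lam i))"
  show ?case
  proof (cases "even r")
    case True
    have "real (diag_count lam (Suc r) t) =
        real CARD('k) ^ r + ?\<sigma> r * of_int (qchar (lam r)) * real CARD('k) ^ (r div 2) * of_int (qchar t)" for t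
      by (rule diag_count_step_from_even[where lam = lam and r = r]) (use IH True lam_r in simp_all)
    with True show ?thesis
      by (simp add: qchar_mult[OF two_neq_zero] mult_ac)
  next
    case False
    have "real CARD('k) * real (diag_count lam (Suc r) t) =
        real CARD('k) ^ Suc r + ?\<sigma> r * of_int (qchar (lam r) * qchar (-1::'k)) *
        real CARD('k) ^ (Suc r div 2) * (if t = 0 then real CARD('k) - 1 else -1)" for t
      by (rule diag_count_step_from_odd[where lam = lam and r = r]) (use IH False lam_r in simp_all)
    moreover have "Suc r div 2 = Suc (r div 2)"
      using False by presburger
    ultimately show ?thesis
      using False by (simp add: qchar_mult[OF two_neq_zero] mult_ac)
  qed
qed

end

section \<open>Vector spaces over finite fields\<close>

lemma (in vector_space) card_span_independent:
  assumes "finite (UNIV::'a set)" and "finite B" and "independent B"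
  shows "card (span B) = CARD('a) ^ card B"
proof -
  let ?comb = "\<lambda>u. \<Sum>v\<in>B. u v *s v"
  have "span B = ?comb ` (B \<rightarrow>\<^sub>E UNIV)"
  proof
    show "span B \<subseteq> ?comb ` (B \<rightarrow>\<^sub>E UNIV)"
    proof
      fix x assume "x \<in> span B"
      then obtain u where "x = ?comb u"
        using span_finite[OF assms(2)] by auto
      moreover have "?comb u = ?comb (restrict u B)"
        by (rule sum.cong) simp_all
      ultimately have "x = ?comb (restrict u B)"
        by (rule trans)
      moreover have "restrict u B \<in> B \<rightarrow>\<^sub>E UNIV"
        by simp
      ultimately show "x \<in> ?comb ` (B \<rightarrow>\<^sub>E UNIV)"
        by (rule image_eqI)
    qed
  qed (use span_finite[OF assms(2)] in blast)
  moreover have "inj_on ?comb (B \<rightarrow>\<^sub>E UNIV)"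
  proof
    fix u w assume u: "u \<in> B \<rightarrow>\<^sub>E UNIV" and w: "w \<in> B \<rightarrow>\<^sub>E UNIV" and "?comb u = ?comb w"
    have indep_B: "\<And>c. (\<Sum>v\<in>B. c v *s v) = 0 \<Longrightarrow> \<forall>v\<in>B. c v = 0"
      using assms(3) dependent_finite[OF assms(2)] by blast
    have "(\<Sum>v\<in>B. (u v - w v) *s v) = 0"
      using \<open>?comb u = ?comb w\<close> by (simp add: scale_left_diff_distrib sum_subtractf)
    then have "\<forall>v\<in>B. u v - w v = 0"
      by (rule indep_B)
    then show "u = w"
      using u w by (intro PiE_ext) auto
  qed
  ultimately have "card (span B) = card (B \<rightarrow>\<^sub>E (UNIV::'a set))"
    by (simp add: card_image)
  also have "\<dots> = CARD('a) ^ card B"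
    using assms(2) by (simp add: card_PiE)
  finally show ?thesis .
qed

lemma (in vector_space) dim_eq_of_card:
  assumes "finite (UNIV::'a set)" and "subspace S" and "finite S" and "card S = CARD('a) ^ d"
  shows "dim S = d"
proof -
  obtain B where B: "B \<subseteq> S" "independent B" "S \<subseteq> span B" "card B = dim S"
    using basis_exists by blast
  have "finite B"
    using B(1) assms(3) finite_subset by blast
  moreover have "span B = S"
    using span_subspace B assms(2) by blast
  ultimately have "CARD('a) ^ card B = CARD('a) ^ d"
    using card_span_independent[OF assms(1) \<open>finite B\<close> B(2)] assms(4) by simp
  moreover have "card {0::'a, 1} \<le> CARD('a)"
    by (rule card_mono[OF assms(1)]) simp
  ultimately show ?thesis
    using B(4) by (simp add: power_inject_exp)
qed

section \<open>Field embeddings\<close>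

locale field_embedding =
  fixes e :: "'k::field \<Rightarrow> 'a::field"
  assumes field_emb: "field_emb e"
begin

lemma emb_add [simp]: "e (x + y) = e x + e y"
  using field_emb by (simp add: field_emb_def)

lemma emb_mult [simp]: "e (x * y) = e x * e y"
  using field_emb by (simp add: field_emb_def)

lemma emb_1 [simp]: "e 1 = 1"
  using field_emb by (simp add: field_emb_def)

lemma emb_0 [simp]: "e 0 = 0"
proof -
  have "e 0 + e 0 = e 0 + 0"
    by (simp flip: emb_add)
  then show ?thesis
    by (rule add_left_imp_eq)
qed

lemma emb_minus [simp]: "e (- x) = - e x"
proof -
  have "e x + e (- x) = 0"
    by (simp flip: emb_add)
  from minus_unique[OF this] show ?thesis
    by simp
qed

lemma emb_diff [simp]: "e (x - y) = e x - e y"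
  using emb_add[of x "- y"] by simp

lemma emb_eq_0_iff [simp]: "e x = 0 \<longleftrightarrow> x = 0"
proof
  assume "e x = 0"
  show "x = 0"
  proof (rule ccontr)
    assume "x \<noteq> 0"
    then have "e x * e (inverse x) = 1"
      by (simp flip: emb_mult)
    with \<open>e x = 0\<close> show False
      by simp
  qed
qed simp

lemma emb_inverse: "e (inverse x) = inverse (e x)"
proof (cases "x = 0")
  case False
  then have "e x * e (inverse x) = 1"
    by (simp flip: emb_mult)
  then show ?thesis
    by (simp add: inverse_unique)
qed simp

lemma emb_divide: "e (x / y) = e x / e y"
  by (simp add: divide_inverse emb_inverse)

lemma inj_emb: "inj e"
proof (rule injI)
  fix x y
  assume "e x = e y"
  then have "e (x - y) = 0"
    by simp
  then show "x = y"
    by (simp only: emb_eq_0_iff right_minus_eq)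
qed

lemma emb_power: "e (x ^ n) = e x ^ n"
  by (induction n) simp_all

lemma emb_of_nat: "e (of_nat n) = of_nat n"
  by (induction n) simp_all

lemma CHAR_eq: "CHAR('a) = CHAR('k)"
proof -
  have of_nat_eq_0: "(of_nat c :: 'a) = 0 \<longleftrightarrow> (of_nat c :: 'k) = 0" for c
    by (metis emb_of_nat emb_eq_0_iff)
  show ?thesis
    by (rule CHAR_eqI) (simp_all add: of_nat_eq_0 of_nat_eq_0_iff_char_dvd)
qed

sublocale vs: vector_space "\<lambda>a x. e a * x"
  by unfold_locales (simp_all add: algebra_simps)

end

section \<open>Coordinates in a finite field extension\<close>

locale finite_field_extension = field_embedding e
  for e :: "'k::{finite,field} \<Rightarrow> 'a::{finite,field}" +
  fixes q n :: nat
  assumes card_base: "CARD('k) = q" and card_ext: "CARD('a) = q ^ n"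
begin

(* Bases are indexed sequences, matching the coordinates in the definition of qf_eps. *)

definition independent_seq :: "(nat \<Rightarrow> 'a) \<Rightarrow> nat \<Rightarrow> bool" where
  "independent_seq v m \<longleftrightarrow> (\<forall>x. (\<Sum>i<m. e (x i) * v i) = 0 \<longrightarrow> (\<forall>i<m. x i = 0))"

definition span_seq :: "(nat \<Rightarrow> 'a) \<Rightarrow> nat \<Rightarrow> 'a set" where
  "span_seq v m = range (\<lambda>x. \<Sum>i<m. e (x i) * v i)"

lemma q_gt_one: "q > 1"
  using finite_field_card_gt_one[where 'k = 'k] card_base by simp

lemma ext_degree_pos: "n \<ge> 1"
proof (rule ccontr)
  assume "\<not> n \<ge> 1"
  then have "CARD('a) = 1"
    using card_ext by simp
  moreover have "card {0::'a, 1} \<le> CARD('a)"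
    by (rule card_mono) simp_all
  ultimately show False
    by simp
qed

lemma lincomb_add: "(\<Sum>i<m. e (x i) * v i) + (\<Sum>i<m. e (y i) * v i) = (\<Sum>i<m. e (x i + y i) * v i)"
  by (simp add: sum.distrib algebra_simps)

lemma lincomb_diff: "(\<Sum>i<m. e (x i) * v i) - (\<Sum>i<m. e (y i) * v i) = (\<Sum>i<m. e (x i - y i) * v i)"
  by (simp add: sum_subtractf algebra_simps)

lemma independent_seqD:
  "independent_seq v m \<Longrightarrow> (\<Sum>i<m. e (x i) * v i) = 0 \<Longrightarrow> i < m \<Longrightarrow> x i = 0"
  unfolding independent_seq_def by blast

lemma span_seq_add:
  assumes "x \<in> span_seq v m" and "y \<in> span_seq v m"
  shows "x + y \<in> span_seq v m"
proof -
  obtain c d where "x = (\<Sum>i<m. e (c i) * v i)" and "y = (\<Sum>i<m. e (d i) * v i)"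
    using assms by (auto simp: span_seq_def)
  then have "x + y = (\<Sum>i<m. e (c i + d i) * v i)"
    by (simp only: lincomb_add)
  then show ?thesis
    unfolding span_seq_def by (rule range_eqI[where x = "\<lambda>i. c i + d i"])
qed

lemma span_seq_eq_image_PiE: "span_seq v m = (\<lambda>x. \<Sum>i<m. e (x i) * v i) ` ({..<m} \<rightarrow>\<^sub>E UNIV)"
proof
  show "span_seq v m \<subseteq> (\<lambda>x. \<Sum>i<m. e (x i) * v i) ` ({..<m} \<rightarrow>\<^sub>E UNIV)"
  proof
    fix y assume "y \<in> span_seq v m"
    then obtain x where "y = (\<Sum>i<m. e (x i) * v i)"
      by (auto simp: span_seq_def)
    also have "\<dots> = (\<Sum>i<m. e (restrict x {..<m} i) * v i)"
      by (rule sum.cong) simp_all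
    finally have "y = (\<Sum>i<m. e (restrict x {..<m} i) * v i)" .
    moreover have "restrict x {..<m} \<in> {..<m} \<rightarrow>\<^sub>E UNIV"
      by simp
    ultimately show "y \<in> (\<lambda>x. \<Sum>i<m. e (x i) * v i) ` ({..<m} \<rightarrow>\<^sub>E UNIV)"
      by (rule image_eqI)
  qed
qed (auto simp: span_seq_def)

lemma inj_on_lincomb:
  assumes "independent_seq v m"
  shows "inj_on (\<lambda>x. \<Sum>i<m. e (x i) * v i) ({..<m} \<rightarrow>\<^sub>E UNIV)"
proof
  fix x y assume x: "x \<in> {..<m} \<rightarrow>\<^sub>E UNIV" and y: "y \<in> {..<m} \<rightarrow>\<^sub>E UNIV"
    and "(\<Sum>i<m. e (x i) * v i) = (\<Sum>i<m. e (y i) * v i)"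
  then have "(\<Sum>i<m. e (x i - y i) * v i) = 0"
    by (simp only: lincomb_diff[symmetric] right_minus_eq)
  then have "\<forall>i<m. x i - y i = 0"
    using independent_seqD[OF assms, of "\<lambda>i. x i - y i"] by blast
  then show "x = y"
    using x y by (intro PiE_ext) auto
qed

lemma card_span_seq:
  assumes "independent_seq v m"
  shows "card (span_seq v m) = q ^ m"
  by (simp add: span_seq_eq_image_PiE card_image[OF inj_on_lincomb[OF assms]] card_PiE card_base)

lemma independent_seq_length_le:
  assumes "independent_seq v m"
  shows "m \<le> n"
proof -
  have "card (span_seq v m) \<le> CARD('a)"
    by (rule card_mono) auto
  then have "q ^ m \<le> q ^ n"
    using card_span_seq[OF assms] card_ext by simp
  then show ?thesis
    using q_gt_one by simp
qed

lemma span_seq_basis: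
  assumes "independent_seq v n"
  shows "span_seq v n = UNIV"
  using card_span_seq[OF assms] card_ext by (metis card_subset_eq finite subset_UNIV)

lemma independent_seq_extend:
  assumes "independent_seq v m" and "w \<notin> span_seq v m"
  shows "independent_seq (v(m := w)) (Suc m)"
  unfolding independent_seq_def
proof (rule allI, rule impI)
  fix x :: "nat \<Rightarrow> 'k"
  assume "(\<Sum>i<Suc m. e (x i) * (v(m := w)) i) = 0"
  moreover have "(\<Sum>i<m. e (x i) * (v(m := w)) i) = (\<Sum>i<m. e (x i) * v i)"
    by (rule sum.cong) auto
  ultimately have sum_eq: "(\<Sum>i<m. e (x i) * v i) + e (x m) * w = 0"
    by simp
  have "x m = 0"
  proof (rule ccontr)
    assume "x m \<noteq> 0"
    then have "w = - (\<Sum>i<m. e (x i) * v i) / e (x m)"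
      using sum_eq by (simp add: field_simps eq_neg_iff_add_eq_0)
    also have "\<dots> = (\<Sum>i<m. e (- x i / x m) * v i)"
      by (simp add: emb_divide sum_divide_distrib sum_negf[symmetric])
    finally have "w \<in> span_seq v m"
      unfolding span_seq_def by (rule range_eqI[where x = "\<lambda>i. - x i / x m"])
    with assms(2) show False ..
  qed
  with sum_eq have "(\<Sum>i<m. e (x i) * v i) = 0"
    by simp
  then have "\<forall>i<m. x i = 0"
    using independent_seqD[OF assms(1)] by blast
  with \<open>x m = 0\<close> show "\<forall>i<Suc m. x i = 0"
    using less_Suc_eq by auto
qed

end

section \<open>Quadratic forms over a finite field\<close>

lemma rescale_count:
  fixes Q N s a b c :: real
  assumes "Q > 0" and "b > 0" and "a * (b * b) = c * Q" and "Q * N = b * b + s * b"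
  shows "a * N = c * (1 + s / b)"
proof -
  have "a * N * (Q * b) = a * b * (Q * N)"
    by (simp only: mult_ac)
  also have "\<dots> = a * (b * b) * (b + s)"
    by (simp only: assms(4)) (simp add: algebra_simps)
  also have "\<dots> = c * (1 + s / b) * (Q * b)"
    using assms(2,3) by (simp add: field_simps)
  finally show ?thesis
    using assms(1,2) by simp
qed

locale quadratic_form = finite_field_extension e q n
  for e :: "'k::{finite,field} \<Rightarrow> 'a::{finite,field}" and q n +
  fixes Q :: "'a \<Rightarrow> 'k"
  assumes quad_form: "quad_form e Q" and two_neq_zero: "(2::'k) \<noteq> 0"
begin

lemma Q_scale: "Q (e a * x) = a ^ 2 * Q x"
  using quad_form by (simp add: quad_form_def)

lemma bform_add_left: "bform Q (x + x') y = bform Q x y + bform Q x' y"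
  using quad_form by (simp add: quad_form_def)

lemma bform_scale_left: "bform Q (e a * x) y = a * bform Q x y"
  using quad_form by (simp add: quad_form_def)

lemma bform_commute: "bform Q x y = bform Q y x"
  by (simp add: bform_def add.commute)

lemma bform_add_right: "bform Q x (y + y') = bform Q x y + bform Q x y'"
  by (simp add: bform_commute[of x] bform_add_left)

lemma bform_scale_right: "bform Q x (e a * y) = a * bform Q x y"
  by (simp add: bform_commute[of x] bform_scale_left)

lemma Q_0 [simp]: "Q 0 = 0"
  using Q_scale[of 0 0] by simp

lemma bform_0_left [simp]: "bform Q 0 y = 0"
  using bform_scale_left[of 0 0 y] by simp

lemma bform_0_right [simp]: "bform Q x 0 = 0"
  using bform_scale_right[of x 0 0] by simp

lemma Q_add: "Q (x + y) = Q x + Q y + 2 * bform Q x y"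
proof -
  have "2 * bform Q x y = Q (x + y) - Q x - Q y"
    using two_neq_zero by (simp add: bform_def)
  then show ?thesis
    by (simp add: algebra_simps)
qed

lemma bform_diag: "bform Q x x = Q x"
proof -
  have "e 2 = 2"
    by (metis emb_1 emb_add one_add_one)
  then have "x + x = e 2 * x"
    by simp
  then have "Q (x + x) = 2 ^ 2 * Q x"
    by (simp only: Q_scale)
  then have "2 * bform Q x x = 2 * Q x"
    using Q_add[of x x] by algebra
  then show ?thesis
    using two_neq_zero by simp
qed

lemma bform_lincomb_left: "bform Q (\<Sum>i\<in>A. e (c i) * v i) y = (\<Sum>i\<in>A. c i * bform Q (v i) y)"
  by (induction A rule: infinite_finite_induct) (simp_all add: bform_add_left bform_scale_left)

lemma bform_lincomb_right: "bform Q y (\<Sum>i\<in>A. e (c i) * v i) = (\<Sum>i\<in>A. c i * bform Q y (v i))"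
  by (simp add: bform_commute[of y] bform_lincomb_left)

definition orthogonal_seq :: "(nat \<Rightarrow> 'a) \<Rightarrow> nat \<Rightarrow> bool" where
  "orthogonal_seq v m \<longleftrightarrow> (\<forall>i<m. \<forall>j<m. i \<noteq> j \<longrightarrow> bform Q (v i) (v j) = 0)"

definition radical :: "'a set" where
  "radical = {x. \<forall>y. bform Q x y = 0}"

definition orth_complement :: "(nat \<Rightarrow> 'a) \<Rightarrow> nat \<Rightarrow> 'a set" where
  "orth_complement v m = {x. \<forall>i<m. bform Q (v i) x = 0}"

lemma bform_lincomb_orthogonal:
  assumes "orthogonal_seq v m" and "j < m"
  shows "bform Q (v j) (\<Sum>i<m. e (c i) * v i) = c j * Q (v j)"
proof -
  have "bform Q (v j) (\<Sum>i<m. e (c i) * v i) = (\<Sum>i\<in>{j}. c i * bform Q (v j) (v i))"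
    unfolding bform_lincomb_right
    using assms unfolding orthogonal_seq_def by (intro sum.mono_neutral_right) auto
  then show ?thesis
    by (simp add: bform_diag)
qed

lemma Q_lincomb_orthogonal:
  assumes "orthogonal_seq v m"
  shows "Q (\<Sum>i<m. e (c i) * v i) = (\<Sum>i<m. c i ^ 2 * Q (v i))"
  using assms
proof (induction m)
  case (Suc m)
  then have "orthogonal_seq v m"
    by (simp add: orthogonal_seq_def)
  moreover have "bform Q (\<Sum>i<m. e (c i) * v i) (e (c m) * v m) = 0"
    using Suc.prems unfolding bform_lincomb_left orthogonal_seq_def
    by (auto simp: bform_scale_right intro!: sum.neutral)
  ultimately show ?case
    using Suc.IH by (simp add: Q_add Q_scale)
qed simp

lemma orthogonal_nonisotropic_independent:
  assumes "orthogonal_seq v m" and "\<forall>i<m. Q (v i) \<noteq> 0"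
  shows "independent_seq v m"
  unfolding independent_seq_def
proof (rule allI, rule impI)
  fix x :: "nat \<Rightarrow> 'k"
  assume "(\<Sum>i<m. e (x i) * v i) = 0"
  then have "x j * Q (v j) = 0" if "j < m" for j
    using bform_lincomb_orthogonal[OF assms(1) that, of x] by simp
  then show "\<forall>i<m. x i = 0"
    using assms(2) by simp
qed

lemma orthogonal_seq_extend:
  assumes "orthogonal_seq v m" and "w \<in> orth_complement v m"
  shows "orthogonal_seq (v(m := w)) (Suc m)"
  using assms bform_commute unfolding orthogonal_seq_def orth_complement_def
  by (auto simp: less_Suc_eq)

lemma bform_radical_left: "x \<in> radical \<Longrightarrow> bform Q x y = 0"
  by (simp add: radical_def)

lemma bform_radical_right: "y \<in> radical \<Longrightarrow> bform Q x y = 0"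
  by (simp add: radical_def bform_commute[of x])

lemma Q_radical: "x \<in> radical \<Longrightarrow> Q x = 0"
  by (simp add: radical_def flip: bform_diag)

lemma radical_subspace: "vs.subspace radical"
  unfolding vs.subspace_def radical_def by (simp add: bform_add_left bform_scale_left)

lemma bform_diff_right: "bform Q x (y - y') = bform Q x y - bform Q x y'"
  using bform_add_right[of x "y - y'" y'] by simp

lemma exists_maximal_orthogonal_seq:
  "\<exists>k v. orthogonal_seq v k \<and> (\<forall>i<k. Q (v i) \<noteq> 0) \<and> (\<forall>w\<in>orth_complement v k. Q w = 0)"
proof (rule ccontr)
  assume "\<not> ?thesis"
  then have extend: "\<exists>w\<in>orth_complement v k. Q w \<noteq> 0"
    if "orthogonal_seq v k" and "\<forall>i<k. Q (v i) \<noteq> 0" for k v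
    using that by blast
  have "\<exists>v. orthogonal_seq v m \<and> (\<forall>i<m. Q (v i) \<noteq> 0)" for m
  proof (induction m)
    case 0
    show ?case
      by (simp add: orthogonal_seq_def)
  next
    case (Suc m)
    then obtain v where v: "orthogonal_seq v m" "\<forall>i<m. Q (v i) \<noteq> 0"
      by blast
    then obtain w where w: "w \<in> orth_complement v m" "Q w \<noteq> 0"
      using extend by blast
    have "orthogonal_seq (v(m := w)) (Suc m)"
      by (rule orthogonal_seq_extend[OF v(1) w(1)])
    moreover have "\<forall>i<Suc m. Q ((v(m := w)) i) \<noteq> 0"
      using v(2) w(2) by (simp add: less_Suc_eq)
    ultimately show ?case
      by blast
  qed
  then obtain v where "orthogonal_seq v (Suc n)" and "\<forall>i<Suc n. Q (v i) \<noteq> 0"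
    by blast
  then have "independent_seq v (Suc n)"
    by (rule orthogonal_nonisotropic_independent)
  then show False
    using independent_seq_length_le by fastforce
qed

lemma orthogonal_projection:
  assumes "orthogonal_seq v k" and "\<forall>i<k. Q (v i) \<noteq> 0"
  shows "x - (\<Sum>i<k. e (bform Q (v i) x / Q (v i)) * v i) \<in> orth_complement v k"
  unfolding orth_complement_def
proof (intro CollectI allI impI)
  fix j assume "j < k"
  then show "bform Q (v j) (x - (\<Sum>i<k. e (bform Q (v i) x / Q (v i)) * v i)) = 0"
    using assms by (simp add: bform_diff_right bform_lincomb_orthogonal[OF assms(1) \<open>j < k\<close>])
qed

lemma orth_complement_eq_radical:
  assumes "orthogonal_seq v k" and "\<forall>i<k. Q (v i) \<noteq> 0"
    and isotropic: "\<forall>w\<in>orth_complement v k. Q w = 0"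
  shows "orth_complement v k = radical"
proof
  show "radical \<subseteq> orth_complement v k"
    by (auto simp: orth_complement_def bform_radical_right)
next
  show "orth_complement v k \<subseteq> radical"
  proof
    fix w assume w: "w \<in> orth_complement v k"
    have "bform Q w y = 0" for y
    proof -
      let ?p = "\<Sum>i<k. e (bform Q (v i) y / Q (v i)) * v i"
      have u: "y - ?p \<in> orth_complement v k"
        by (rule orthogonal_projection[OF assms(1,2)])
      have "bform Q w ?p = 0"
        using w by (simp add: bform_lincomb_right orth_complement_def bform_commute)
      moreover have "w + (y - ?p) \<in> orth_complement v k"
        using w u by (simp add: orth_complement_def bform_add_right)
      then have "bform Q w (y - ?p) = 0"
        using Q_add[of w "y - ?p"] isotropic w u two_neq_zero by simp
      ultimately show ?thesis
        using bform_add_right[of w ?p "y - ?p"] by simp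
    qed
    then show "w \<in> radical"
      by (simp add: radical_def)
  qed
qed

lemma span_seq_eq_UNIV_if_radical_subset:
  assumes "orthogonal_seq v k" and "\<forall>i<k. Q (v i) \<noteq> 0" and "orth_complement v k = radical"
    and "k \<le> m" and "\<forall>i<k. V i = v i" and "radical \<subseteq> span_seq V m"
  shows "span_seq V m = UNIV"
proof -
  have "x \<in> span_seq V m" for x
  proof -
    let ?c = "\<lambda>i. if i < k then bform Q (v i) x / Q (v i) else 0"
    let ?p = "\<Sum>i<k. e (bform Q (v i) x / Q (v i)) * v i"
    have "(\<Sum>i<m. e (?c i) * V i) = (\<Sum>i<k. e (?c i) * V i)"
      using assms(4) by (intro sum.mono_neutral_right) auto
    also have "\<dots> = ?p"
      using assms(5) by (intro sum.cong) auto
    finally have "?p \<in> span_seq V m"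
      unfolding span_seq_def by (rule range_eqI[where x = ?c, OF sym])
    moreover have "x - ?p \<in> span_seq V m"
      using orthogonal_projection[OF assms(1,2), of x] assms(3,6) by blast
    ultimately show ?thesis
      using span_seq_add by fastforce
  qed
  then show ?thesis
    by blast
qed

lemma radical_not_subset_span_seq:
  assumes "orthogonal_seq v k" and "\<forall>i<k. Q (v i) \<noteq> 0" and "orth_complement v k = radical"
    and "independent_seq V m" and "k \<le> m" and "m < n" and "\<forall>i<k. V i = v i"
  shows "\<not> radical \<subseteq> span_seq V m"
proof
  assume "radical \<subseteq> span_seq V m"
  then have "span_seq V m = UNIV"
    using span_seq_eq_UNIV_if_radical_subset[OF assms(1-3,5,7)] by simp
  then have "q ^ m = q ^ n"
    using card_span_seq[OF assms(4)] card_ext by simp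
  with assms(6) q_gt_one show False
    by simp
qed

lemma extend_by_radical:
  assumes "orthogonal_seq v k" and "\<forall>i<k. Q (v i) \<noteq> 0" and "orth_complement v k = radical"
  shows "\<exists>V. independent_seq V n \<and> (\<forall>i<k. V i = v i) \<and> (\<forall>i. k \<le> i \<longrightarrow> i < n \<longrightarrow> V i \<in> radical)"
proof -
  have v_indep: "independent_seq v k"
    by (rule orthogonal_nonisotropic_independent[OF assms(1,2)])
  have "k + d \<le> n \<longrightarrow> (\<exists>V. independent_seq V (k + d) \<and> (\<forall>i<k. V i = v i) \<and>
      (\<forall>i. k \<le> i \<longrightarrow> i < k + d \<longrightarrow> V i \<in> radical))" for d
  proof (induction d)
    case 0
    show ?case
      using v_indep by auto
  next
    case (Suc d)
    show ?case
    proof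
      assume le: "k + Suc d \<le> n"
      then obtain V where V: "independent_seq V (k + d)" "\<forall>i<k. V i = v i"
          "\<forall>i. k \<le> i \<longrightarrow> i < k + d \<longrightarrow> V i \<in> radical"
        using Suc.IH by auto
      have "\<not> radical \<subseteq> span_seq V (k + d)"
        using radical_not_subset_span_seq[OF assms V(1)] V(2) le by simp
      then obtain w where w: "w \<in> radical" "w \<notin> span_seq V (k + d)"
        by blast
      have "independent_seq (V(k + d := w)) (k + Suc d)"
        using independent_seq_extend[OF V(1) w(2)] by simp
      moreover have "\<forall>i. k \<le> i \<longrightarrow> i < k + Suc d \<longrightarrow> (V(k + d := w)) i \<in> radical"
        using V(3) w(1) by (simp add: less_Suc_eq)
      ultimately show "\<exists>V. independent_seq V (k + Suc d) \<and> (\<forall>i<k. V i = v i) \<and>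
          (\<forall>i. k \<le> i \<longrightarrow> i < k + Suc d \<longrightarrow> V i \<in> radical)"
        using V(2) by auto
    qed
  qed
  from this[of "n - k"] show ?thesis
    using independent_seq_length_le[OF v_indep] by simp
qed

definition diagonal_basis :: "(nat \<Rightarrow> 'a) \<Rightarrow> nat \<Rightarrow> bool" where
  "diagonal_basis V k \<longleftrightarrow> k \<le> n \<and> independent_seq V n \<and> orthogonal_seq V n \<and>
     (\<forall>i<k. Q (V i) \<noteq> 0) \<and> (\<forall>i. k \<le> i \<longrightarrow> i < n \<longrightarrow> V i \<in> radical)"

lemma exists_diagonal_basis: "\<exists>V k. diagonal_basis V k"
proof -
  obtain k v where v: "orthogonal_seq v k" "\<forall>i<k. Q (v i) \<noteq> 0" "\<forall>w\<in>orth_complement v k. Q w = 0"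
    using exists_maximal_orthogonal_seq by blast
  have rad: "orth_complement v k = radical"
    by (rule orth_complement_eq_radical[OF v])
  obtain V where V: "independent_seq V n" "\<forall>i<k. V i = v i" "\<forall>i. k \<le> i \<longrightarrow> i < n \<longrightarrow> V i \<in> radical"
    using extend_by_radical[OF v(1,2) rad] by blast
  have "k \<le> n"
    using independent_seq_length_le orthogonal_nonisotropic_independent[OF v(1,2)] by blast
  moreover have "orthogonal_seq V n"
    unfolding orthogonal_seq_def
  proof (intro allI impI)
    fix i j assume "i < n" "j < n" "i \<noteq> j"
    show "bform Q (V i) (V j) = 0"
    proof (cases "i < k \<and> j < k")
      case True
      then show ?thesis
        using v(1) V(2) \<open>i \<noteq> j\<close> by (simp add: orthogonal_seq_def)
    next
      case False
      then have "V i \<in> radical \<or> V j \<in> radical"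
        using V(3) \<open>i < n\<close> \<open>j < n\<close> by auto
      then show ?thesis
        using bform_radical_left bform_radical_right by blast
    qed
  qed
  moreover have "\<forall>i<k. Q (V i) \<noteq> 0"
    using V(2) v(2) by simp
  ultimately show ?thesis
    using V(1,3) unfolding diagonal_basis_def by blast
qed

lemma qf_rank_le: "qf_rank e n Q \<le> n"
  by (simp add: qf_rank_def)

lemma radical_eq_lincomb_image:
  assumes "diagonal_basis V k"
  shows "radical = (\<lambda>c. \<Sum>i<n. e (c i) * V i) ` PiE {..<n} (\<lambda>i. if i < k then {0} else UNIV)"
    (is "_ = ?comb ` ?C")
proof
  have V: "k \<le> n" "independent_seq V n" "orthogonal_seq V n" "\<forall>i<k. Q (V i) \<noteq> 0"
    "\<forall>i. k \<le> i \<longrightarrow> i < n \<longrightarrow> V i \<in> radical"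
    using assms by (simp_all add: diagonal_basis_def)
  show "?comb ` ?C \<subseteq> radical"
  proof
    fix x assume "x \<in> ?comb ` ?C"
    then obtain c where c: "c \<in> ?C" "x = ?comb c"
      by blast
    have "c i * bform Q (V i) y = 0" if "i < n" for i y
    proof (cases "i < k")
      case True
      then have "c i = 0"
        using PiE_mem[OF c(1), of i] that by simp
      then show ?thesis
        by simp
    next
      case False
      then show ?thesis
        using V(5) that by (simp add: bform_radical_left)
    qed
    then have "bform Q x y = 0" for y
      unfolding c(2) bform_lincomb_left by (intro sum.neutral) simp
    then show "x \<in> radical"
      by (simp add: radical_def)
  qed
  show "radical \<subseteq> ?comb ` ?C"
  proof
    fix x assume x: "x \<in> radical"
    then obtain c where c: "c \<in> {..<n} \<rightarrow>\<^sub>E UNIV" "x = ?comb c"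
      using span_seq_basis[OF V(2)] span_seq_eq_image_PiE by blast
    have "c j = 0" if "j < k" for j
    proof -
      have "c j * Q (V j) = bform Q (V j) x"
        using bform_lincomb_orthogonal[OF V(3)] that V(1) c(2) by simp
      also have "\<dots> = 0"
        using x by (rule bform_radical_right)
      finally show ?thesis
        using V(4) that by simp
    qed
    then have "c \<in> ?C"
      using c(1) by (auto simp: PiE_iff)
    then show "x \<in> ?comb ` ?C"
      using c(2) by blast
  qed
qed

lemma card_radical:
  assumes "diagonal_basis V k"
  shows "card radical = q ^ (n - k)"
proof -
  let ?C = "PiE {..<n} (\<lambda>i. if i < k then {0} else (UNIV::'k set))"
  have "inj_on (\<lambda>c. \<Sum>i<n. e (c i) * V i) ?C"
    using assms unfolding diagonal_basis_def
    by (intro inj_on_subset[OF inj_on_lincomb]) (auto simp: PiE_iff)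
  then have "card radical = card ?C"
    by (simp add: radical_eq_lincomb_image[OF assms] card_image)
  also have "\<dots> = (\<Prod>i<n. if i < k then 1 else q)"
    by (simp add: card_PiE card_base if_distrib[of card] cong: if_cong)
  also have "\<dots> = (\<Prod>i\<in>{k..<n}. q)"
    by (rule prod.mono_neutral_cong_right) auto
  finally show ?thesis
    by simp
qed

lemma qf_rank_eq:
  assumes "diagonal_basis V k"
  shows "qf_rank e n Q = k"
proof -
  have "vs.dim radical = n - k"
    using card_radical[OF assms] radical_subspace card_base by (intro vs.dim_eq_of_card) simp_all
  then show ?thesis
    using assms by (simp add: qf_rank_def radical_def diagonal_basis_def)
qed

lemma exists_diagonal_coordinates:
  "\<exists>v lam. independent_seq v n \<and> (\<forall>i<qf_rank e n Q. lam i \<noteq> 0) \<and>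
     (\<forall>x. Q (\<Sum>i<n. e (x i) * v i) = (\<Sum>i<qf_rank e n Q. lam i * x i ^ 2))"
proof -
  obtain V k where basis: "diagonal_basis V k"
    using exists_diagonal_basis by blast
  then have V: "k \<le> n" "independent_seq V n" "orthogonal_seq V n" "\<forall>i<k. Q (V i) \<noteq> 0"
      "\<forall>i. k \<le> i \<longrightarrow> i < n \<longrightarrow> V i \<in> radical"
    by (simp_all add: diagonal_basis_def)
  have "Q (\<Sum>i<n. e (x i) * V i) = (\<Sum>i<k. Q (V i) * x i ^ 2)" for x
  proof -
    have "Q (\<Sum>i<n. e (x i) * V i) = (\<Sum>i<n. x i ^ 2 * Q (V i))"
      by (rule Q_lincomb_orthogonal[OF V(3)])
    also have "\<dots> = (\<Sum>i<k. x i ^ 2 * Q (V i))"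
      using V(1,5) by (intro sum.mono_neutral_right) (auto simp: Q_radical)
    finally show ?thesis
      by (simp add: mult.commute)
  qed
  then show ?thesis
    using V(2,4) qf_rank_eq[OF basis] by (intro exI[of _ V] exI[of _ "\<lambda>i. Q (V i)"]) simp
qed

lemma qf_eps_diagonal:
  obtains v lam where "independent_seq v n" and "\<forall>i<qf_rank e n Q. lam i \<noteq> 0"
    and "\<And>x. Q (\<Sum>i<n. e (x i) * v i) = (\<Sum>i<qf_rank e n Q. lam i * x i ^ 2)"
    and "qf_eps e n Q = qchar (\<Prod>i<qf_rank e n Q. lam i)"
proof -
  have "\<exists>\<epsilon> v lam. independent_seq v n \<and> (\<forall>i<qf_rank e n Q. lam i \<noteq> 0) \<and>
      (\<forall>x. Q (\<Sum>i<n. e (x i) * v i) = (\<Sum>i<qf_rank e n Q. lam i * x i ^ 2)) \<and>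
      \<epsilon> = qchar (\<Prod>i<qf_rank e n Q. lam i)"
    using exists_diagonal_coordinates by blast
  from someI_ex[OF this[unfolded independent_seq_def]] that show ?thesis
    unfolding qf_eps_def independent_seq_def by blast
qed

lemma card_level_set_diagonal:
  assumes "independent_seq v n" and "r \<le> n"
    and diag: "\<And>x. Q (\<Sum>i<n. e (x i) * v i) = (\<Sum>i<r. lam i * x i ^ 2)"
  shows "card {x. Q x = t} = q ^ (n - r) * diag_count lam r t"
proof -
  define lam' where "lam' i = (if i < r then lam i else 0)" for i
  let ?comb = "\<lambda>c. \<Sum>i<n. e (c i) * v i"
  let ?P = "{..<n} \<rightarrow>\<^sub>E (UNIV::'k set)"
  have Q_comb: "Q (?comb c) = (\<Sum>i<n. lam' i * c i ^ 2)" for c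
  proof -
    have "(\<Sum>i<n. lam' i * c i ^ 2) = (\<Sum>i<r. lam' i * c i ^ 2)"
      using assms(2) by (intro sum.mono_neutral_right) (auto simp: lam'_def)
    then show ?thesis
      by (simp add: diag lam'_def)
  qed
  have "?comb ` ?P = UNIV"
    using span_seq_basis[OF assms(1)] by (simp add: span_seq_eq_image_PiE)
  then have "{x. Q x = t} = {x \<in> ?comb ` ?P. Q x = t}"
    by simp
  also have "\<dots> = ?comb ` {c \<in> ?P. Q (?comb c) = t}"
    by (rule Compr_image_eq)
  finally have "card {x. Q x = t} = card {c \<in> ?P. Q (?comb c) = t}"
    using inj_on_subset[OF inj_on_lincomb[OF assms(1)]] by (simp add: card_image)
  also have "\<dots> = diag_count lam' n t"
    by (simp add: diag_count_def Q_comb)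
  also have "\<dots> = q ^ (n - r) * diag_count lam' r t"
    using diag_count_zero_coeffs[OF assms(2), of lam'] card_base unfolding lam'_def by simp
  also have "diag_count lam' r t = diag_count lam r t"
    unfolding diag_count_def by (intro arg_cong[where f = card] Collect_cong conj_cong refl sum.cong)
      (simp_all add: lam'_def)
  finally show ?thesis .
qed

definition qf_sign :: int where
  "qf_sign = qchar (-1::'k) ^ (qf_rank e n Q div 2) * qf_eps e n Q"

lemma exists_level_set_count:
  "\<exists>lam. (\<forall>i<qf_rank e n Q. lam i \<noteq> 0) \<and>
     qf_sign = qchar (-1::'k) ^ (qf_rank e n Q div 2) * qchar (\<Prod>i<qf_rank e n Q. lam i) \<and>
     (\<forall>t. card {x. Q x = t} = q ^ (n - qf_rank e n Q) * diag_count lam (qf_rank e n Q) t)"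
proof -
  obtain v lam where v: "independent_seq v n" and lam: "\<forall>i<qf_rank e n Q. lam i \<noteq> 0"
    and diag: "\<And>x. Q (\<Sum>i<n. e (x i) * v i) = (\<Sum>i<qf_rank e n Q. lam i * x i ^ 2)"
    and eps: "qf_eps e n Q = qchar (\<Prod>i<qf_rank e n Q. lam i)"
    using qf_eps_diagonal by blast
  show ?thesis
    using lam eps card_level_set_diagonal[OF v qf_rank_le diag] by (auto simp: qf_sign_def)
qed

lemma qf_sign_cases: "qf_sign = 1 \<or> qf_sign = -1"
proof -
  obtain lam :: "nat \<Rightarrow> 'k" where lam: "\<forall>i<qf_rank e n Q. lam i \<noteq> 0"
    and sign: "qf_sign = qchar (-1::'k) ^ (qf_rank e n Q div 2) * qchar (\<Prod>i<qf_rank e n Q. lam i)"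
    using exists_level_set_count by blast
  have "(\<Prod>i<qf_rank e n Q. lam i) \<noteq> 0"
    using lam by simp
  then have "qchar (\<Prod>i<qf_rank e n Q. lam i) = 1 \<or> qchar (\<Prod>i<qf_rank e n Q. lam i) = -1"
    by (rule qchar_nonzero)
  moreover have "qchar (-1::'k) = 1 \<or> qchar (-1::'k) = -1"
    by (rule qchar_nonzero) simp
  ultimately show ?thesis
    unfolding sign by (cases "even (qf_rank e n Q div 2)") auto
qed

lemma card_level_set_even_rank:
  assumes "even (qf_rank e n Q)"
  shows "real (card {x. Q x = t}) = real q ^ (n - 1) *
    (1 + of_int qf_sign * (if t = 0 then real q - 1 else -1) * real q powr (- real (qf_rank e n Q) / 2))"
proof -
  define r where "r = qf_rank e n Q"
  obtain k where r_eq: "r = 2 * k"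
    using assms unfolding r_def by (rule evenE)
  obtain lam where lam: "\<forall>i<r. lam i \<noteq> 0"
    and sign: "qf_sign = qchar (-1::'k) ^ (r div 2) * qchar (\<Prod>i<r. lam i)"
    and card: "\<forall>t. card {x. Q x = t} = q ^ (n - r) * diag_count lam r t"
    using exists_level_set_count unfolding r_def by blast
  have square: "real q ^ r = real q ^ k * real q ^ k"
    using r_eq by (simp flip: power_add mult_2)
  have count: "real q * real (diag_count lam r t) = real q ^ k * real q ^ k +
      (of_int qf_sign * (if t = 0 then real q - 1 else -1)) * real q ^ k"
    using diag_count_closed_form[OF two_neq_zero lam, unfolded sign[symmetric]] assms r_eq card_base
    by (simp add: r_def[symmetric] power_mult power2_eq_square mult_ac)
  have q_pos: "real q > 0"
    using q_gt_one by simp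
  have "real q ^ (n - r) * (real q ^ k * real q ^ k) = real q ^ n"
    using qf_rank_le unfolding r_def[symmetric] square[symmetric] by (simp flip: power_add)
  also have "\<dots> = real q ^ (n - 1) * real q"
    using ext_degree_pos by (cases n) simp_all
  finally have powers: "real q ^ (n - r) * (real q ^ k * real q ^ k) = real q ^ (n - 1) * real q" .
  have "real q ^ (n - r) * real (diag_count lam r t) = real q ^ (n - 1) *
      (1 + of_int qf_sign * (if t = 0 then real q - 1 else -1) / real q ^ k)"
    by (rule rescale_count[OF q_pos _ powers count]) (use q_pos in simp)
  moreover have "real q powr (- real r / 2) = inverse (real q ^ k)"
    using q_pos r_eq by (simp add: powr_minus powr_realpow[symmetric])
  ultimately show ?thesis
    unfolding r_def[symmetric] card[rule_format] of_nat_mult of_nat_power by (simp only: divide_inverse)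
qed

lemma card_level_set_odd_rank:
  assumes "odd (qf_rank e n Q)"
  shows "real (card {x. Q x = t}) = real q ^ (n - 1) *
    (1 + of_int qf_sign * of_int (qchar t) * real q powr ((1 - real (qf_rank e n Q)) / 2))"
proof -
  define r where "r = qf_rank e n Q"
  obtain k where r_eq: "r = 2 * k + 1"
    using assms unfolding r_def by (rule oddE)
  obtain lam where lam: "\<forall>i<r. lam i \<noteq> 0"
    and sign: "qf_sign = qchar (-1::'k) ^ (r div 2) * qchar (\<Prod>i<r. lam i)"
    and card: "\<forall>t. card {x. Q x = t} = q ^ (n - r) * diag_count lam r t"
    using exists_level_set_count unfolding r_def by blast
  have count: "1 * real (diag_count lam r t) = real q ^ k * real q ^ k +
      (of_int qf_sign * of_int (qchar t)) * real q ^ k"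
    using diag_count_closed_form[OF two_neq_zero lam, unfolded sign[symmetric]] assms r_eq card_base
    by (simp add: r_def[symmetric] power_mult power2_eq_square mult_ac)
  have "real q ^ (n - r) * (real q ^ k * real q ^ k) = real q ^ (n - r + 2 * k)"
    by (simp flip: power_add mult_2)
  also have "n - r + 2 * k = n - 1"
    using qf_rank_le r_eq unfolding r_def[symmetric] by simp
  finally have powers: "real q ^ (n - r) * (real q ^ k * real q ^ k) = real q ^ (n - 1) * 1"
    by simp
  have "real q ^ (n - r) * real (diag_count lam r t) = real q ^ (n - 1) *
      (1 + of_int qf_sign * of_int (qchar t) / real q ^ k)"
    by (rule rescale_count[OF _ _ powers count]) (use q_gt_one in simp_all)
  moreover have "real q powr ((1 - real r) / 2) = inverse (real q ^ k)"
    using q_gt_one r_eq by (simp add: powr_minus powr_realpow[symmetric])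
  ultimately show ?thesis
    unfolding r_def[symmetric] card[rule_format] of_nat_mult of_nat_power by (simp only: divide_inverse)
qed

end

section \<open>The trace of a finite field extension\<close>

context finite_field_extension
begin

lemma card_fibre_eq_kernel:
  fixes f :: "'a \<Rightarrow> 'k"
  assumes add: "\<And>x y. f (x + y) = f x + f y" and scale: "\<And>a y. f (e a * y) = a * f y"
    and nonzero: "f u \<noteq> 0"
  shows "card {y. f y = c} = card {y. f y = 0}"
proof -
  let ?t = "c / f u"
  have f_shift: "f (y + e t * u) = f y + t * f u" for y t
    by (simp add: add scale)
  have "bij_betw (\<lambda>y. y + e ?t * u) {y. f y = 0} {y. f y = c}"
  proof (rule bij_betw_byWitness[where f' = "\<lambda>y. y - e ?t * u"])
    show "(\<lambda>y. y - e ?t * u) ` {y. f y = c} \<subseteq> {y. f y = 0}"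
    proof
      fix z assume "z \<in> (\<lambda>y. y - e ?t * u) ` {y. f y = c}"
      then obtain y where "f y = c" and z: "z = y - e ?t * u"
        by blast
      moreover have "f y = f z + ?t * f u"
        using f_shift[of z ?t] z by simp
      ultimately show "z \<in> {y. f y = 0}"
        using nonzero by simp
    qed
  qed (use f_shift nonzero in auto)
  then show ?thesis
    by (simp add: bij_betw_same_card)
qed

lemma card_fibre_linear_functional:
  fixes f :: "'a \<Rightarrow> 'k"
  assumes add: "\<And>x y. f (x + y) = f x + f y" and scale: "\<And>a y. f (e a * y) = a * f y"
    and nonzero: "f u \<noteq> 0"
  shows "card {y. f y = c} = q ^ (n - 1)"
proof -
  note fibre_card = card_fibre_eq_kernel[OF add scale nonzero]
  have "q ^ n = (\<Sum>c\<in>UNIV. card {y. f y = c})"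
  proof -
    have "(\<Sum>c\<in>UNIV. card {y. f y = c}) = (\<Sum>c\<in>UNIV. \<Sum>y\<in>{y \<in> UNIV. f y = c}. (1::nat))"
      by simp
    also have "\<dots> = (\<Sum>y\<in>(UNIV::'a set). 1)"
      by (rule sum.group) auto
    finally show ?thesis
      using card_ext by simp
  qed
  also have "\<dots> = (\<Sum>c\<in>(UNIV::'k set). card {y. f y = 0})"
    by (rule sum.cong[OF refl fibre_card])
  also have "\<dots> = q * card {y. f y = 0}"
    using card_base by simp
  finally have "q * q ^ (n - 1) = q * card {y. f y = 0}"
    using ext_degree_pos by (cases n) simp_all
  then show ?thesis
    using fibre_card[of c] q_gt_one by simp
qed

end

locale trace_extension = finite_field_extension e q n
  for e :: "'k::{finite,field} \<Rightarrow> 'a::{finite,field}" and q n +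
  fixes m :: nat
  assumes card_char_power: "q = CHAR('k) ^ m"
begin

lemma frobenius_power_add: "(x + y :: 'a) ^ (q ^ j) = x ^ (q ^ j) + y ^ (q ^ j)"
  by (rule freshmans_dream')
    (simp_all add: CHAR_eq finite_imp_CHAR_pos prime_CHAR_semidom card_char_power flip: power_mult)

lemma frobenius_power_sum: "(sum f A :: 'a) ^ (q ^ j) = (\<Sum>i\<in>A. f i ^ (q ^ j))"
  by (rule freshmans_dream_sum')
    (simp_all add: CHAR_eq finite_imp_CHAR_pos prime_CHAR_semidom card_char_power flip: power_mult)

lemma range_emb: "range e = {z. z ^ q = z}"
proof -
  have "e a ^ q = e a" for a
    using finite_field_power_card[of a] card_base by (simp flip: emb_power)
  then have "range e \<subseteq> {z. z ^ q = z}"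
    by auto
  moreover have "card {z::'a. z ^ q = z} \<le> q"
    using card_power_eq_poly_le[of "[:0, 1:]" q] q_gt_one by simp
  moreover have "card (range e) = q"
    using card_image[OF inj_emb] card_base by simp
  ultimately show ?thesis
    by (metis card_seteq finite)
qed

lemma trace_sum_in_range: "(\<Sum>j<n. y ^ (q ^ j)) \<in> range e"
proof -
  let ?f = "\<lambda>j. y ^ (q ^ j)"
  have "(\<Sum>j<n. ?f j) ^ q = (\<Sum>j<n. ?f j ^ q)"
    using frobenius_power_sum[of ?f "{..<n}" 1] by simp
  also have "\<dots> = (\<Sum>j<n. ?f (Suc j))"
    by (intro sum.cong refl) (metis power_Suc2 power_mult)
  also have "\<dots> = (\<Sum>j<n. ?f j)"
  proof -
    have "?f 0 + (\<Sum>j<n. ?f (Suc j)) = (\<Sum>j<n. ?f j) + ?f n"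
      by (simp only: sum.lessThan_Suc_shift[of ?f n, symmetric] sum.lessThan_Suc[of ?f n])
    moreover have "?f n = ?f 0"
      using finite_field_power_card[of y] card_ext by simp
    ultimately show ?thesis
      by (simp add: algebra_simps)
  qed
  finally show ?thesis
    unfolding range_emb by simp
qed

lemma emb_trace: "e (tr e q n y) = (\<Sum>j<n. y ^ (q ^ j))"
  unfolding tr_def using trace_sum_in_range f_the_inv_into_f[OF inj_emb] by blast

lemma trace_eqI: "e a = (\<Sum>j<n. y ^ (q ^ j)) \<Longrightarrow> tr e q n y = a"
  using emb_trace[of y] inj_emb by (metis injD)

lemma trace_add: "tr e q n (x + y) = tr e q n x + tr e q n y"
  by (rule trace_eqI) (simp add: emb_trace frobenius_power_add sum.distrib)

lemma trace_scale: "tr e q n (e a * y) = a * tr e q n y"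
proof (rule trace_eqI)
  have "e a ^ (q ^ j) = e a" for j
    using finite_field_power_card_power[of a j] card_base by (metis emb_power)
  then show "e (a * tr e q n y) = (\<Sum>j<n. (e a * y) ^ (q ^ j))"
    by (simp add: emb_trace power_mult_distrib sum_distrib_left)
qed

lemma trace_0: "tr e q n 0 = 0"
  using trace_scale[of 0 0] by simp

lemma trace_diff: "tr e q n (x - y) = tr e q n x - tr e q n y"
  using trace_add[of "x - y" y] by simp

lemma trace_nonzero: "\<exists>y. tr e q n y \<noteq> 0"
proof -
  let ?R = "\<Sum>j<n - 1. monom (1::'a) (q ^ j)"
  have "degree ?R < q ^ (n - 1)"
  proof (cases "n - 1 = 0")
    case False
    have "degree ?R \<le> q ^ (n - 2)"
    proof (rule degree_sum_le)
      fix j assume "j \<in> {..<n - 1}"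
      then have "q ^ j \<le> q ^ (n - 2)"
        using q_gt_one by (intro power_increasing) auto
      then show "degree (monom (1::'a) (q ^ j)) \<le> q ^ (n - 2)"
        by (simp add: degree_monom_eq)
    qed simp
    also have "q ^ (n - 2) < q ^ (n - 1)"
      using False q_gt_one by (intro power_strict_increasing) auto
    finally show ?thesis .
  qed simp
  then have "card {y. y ^ (q ^ (n - 1)) = poly (- ?R) y} \<le> q ^ (n - 1)"
    by (intro card_power_eq_poly_le) simp
  also have "\<dots> < CARD('a)"
    using card_ext q_gt_one ext_degree_pos by simp
  finally have "{y. y ^ (q ^ (n - 1)) = poly (- ?R) y} \<noteq> UNIV"
    by auto
  then obtain y where y: "y ^ (q ^ (n - 1)) \<noteq> poly (- ?R) y"
    by blast
  have "(\<Sum>j<n. y ^ (q ^ j)) = poly ?R y + y ^ (q ^ (n - 1))"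
    using ext_degree_pos by (cases n) (simp_all add: poly_sum poly_monom)
  with y have "e (tr e q n y) \<noteq> 0"
    by (simp add: emb_trace eq_neg_iff_add_eq_0 add.commute)
  then show ?thesis
    by auto
qed

end

section \<open>Weight enumerators\<close>

lemma image_mset_mset_set_eq_sum: "finite A \<Longrightarrow> image_mset g (mset_set A) = (\<Sum>x\<in>A. {#g x#})"
  by (induction A rule: finite_induct) auto

lemma sum_singleton_mset_const:
  "finite A \<Longrightarrow> (\<And>x. x \<in> A \<Longrightarrow> f x = v) \<Longrightarrow> (\<Sum>x\<in>A. {#f x#}) = replicate_mset (card A) v"
  by (induction A rule: finite_induct) auto

lemma replicate_mset_add: "replicate_mset (m + n) v = replicate_mset m v + replicate_mset n v"
  by (induction m) auto

lemma sum_replicate_mset: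
  "finite A \<Longrightarrow> (\<Sum>x\<in>A. replicate_mset n v) = replicate_mset (card A * n) v"
  by (induction A rule: finite_induct) (simp_all add: replicate_mset_add)

lemma image_mset_sum: "image_mset f (\<Sum>x\<in>A. M x) = (\<Sum>x\<in>A. image_mset f (M x))"
  by (induction A rule: infinite_finite_induct) simp_all

lemma sum_split_parameters:
  fixes f :: "'k::{finite,zero} \<times> 'b::{finite,zero} \<times> 'k \<Rightarrow> 'm::comm_monoid_add"
  shows "(\<Sum>u\<in>UNIV. f u) = (\<Sum>c\<in>UNIV. f (0, 0, c)) + (\<Sum>u\<in>{u. fst (snd u) \<noteq> 0}. f u) +
    (\<Sum>c\<in>UNIV. \<Sum>a\<in>UNIV - {0}. f (a, 0, c))"
proof -
  let ?B0 = "{u::'k \<times> 'b \<times> 'k. fst (snd u) = 0}"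
  have "(\<Sum>u\<in>UNIV. f u) = (\<Sum>u\<in>?B0. f u) + (\<Sum>u\<in>{u. fst (snd u) \<noteq> 0}. f u)"
    by (subst sum.union_disjoint[symmetric]) (auto intro: sum.cong)
  moreover have "(\<Sum>u\<in>?B0. f u) = (\<Sum>(a, c)\<in>UNIV. f (a, 0, c))"
    by (rule sum.reindex_bij_witness[of _ "\<lambda>(a, c). (a, 0, c)" "\<lambda>(a, b, c). (a, c)"]) auto
  moreover have "(\<Sum>(a, c)\<in>UNIV. f (a, 0, c)) = (\<Sum>c\<in>UNIV. \<Sum>a\<in>UNIV. f (a, 0, c))"
    by (subst UNIV_Times_UNIV[symmetric], subst sum.cartesian_product[symmetric]) (rule sum.swap)
  moreover have "\<dots> = (\<Sum>c\<in>UNIV. f (0, 0, c) + (\<Sum>a\<in>UNIV - {0}. f (a, 0, c)))"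
    by (intro sum.cong refl) (simp add: sum.remove[of UNIV 0])
  moreover have "\<dots> = (\<Sum>c\<in>UNIV. f (0, 0, c)) + (\<Sum>c\<in>UNIV. \<Sum>a\<in>UNIV - {0}. f (a, 0, c))"
    by (rule sum.distrib)
  ultimately show ?thesis
    by (simp add: add_ac)
qed

definition value_count :: "('i \<Rightarrow> 'k) \<Rightarrow> 'k \<Rightarrow> real" where
  "value_count f w = real (card {z. f z = w})"

lemma cwe_range_inj:
  fixes F :: "'u::finite \<Rightarrow> 'i \<Rightarrow> 'k"
  assumes "inj F"
  shows "cwe (range F) = (\<Sum>u\<in>UNIV. {#value_count (F u)#})"
proof -
  have "mset_set (range F) = image_mset F (mset_set UNIV)"
    using image_mset_mset_set[of F UNIV] assms by simp
  then show ?thesis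
    by (simp add: cwe_def value_count_def[abs_def] image_mset_mset_set_eq_sum image_mset_sum)
qed

lemma wdist_eq_image_cwe:
  fixes C :: "('i::finite \<Rightarrow> 'k::zero) set"
  shows "wdist C = image_mset (\<lambda>v. real CARD('i) - v 0) (cwe C)"
proof -
  have "real (hweight c) = real CARD('i) - value_count c 0" for c :: "'i \<Rightarrow> 'k"
  proof -
    have "{z. c z \<noteq> 0} = UNIV - {z. c z = 0}"
      by auto
    then have "hweight c = CARD('i) - card {z. c z = 0}"
      by (simp add: hweight_def card_Diff_subset)
    moreover have "card {z. c z = 0} \<le> CARD('i)"
      by (rule card_mono) auto
    ultimately show ?thesis
      by (simp add: value_count_def)
  qed
  then show ?thesis
    by (simp add: wdist_def cwe_def value_count_def[abs_def] image_mset.compositionality comp_def)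
qed

context
  assumes two_neq_zero: "(2::'k::{finite,field}) \<noteq> 0"
begin

lemma sum_replicate_mset_nonzero_qchar:
  "(\<Sum>a\<in>UNIV - {0::'k}. replicate_mset n (g (qchar a))) =
     replicate_mset ((CARD('k) - 1) div 2 * n) (g 1) + replicate_mset ((CARD('k) - 1) div 2 * n) (g (-1))"
proof -
  have "UNIV - {0::'k} = {a. qchar a = 1} \<union> {a. qchar a = -1}"
    using qchar_nonzero by fastforce
  then have "(\<Sum>a\<in>UNIV - {0::'k}. replicate_mset n (g (qchar a))) =
      (\<Sum>a\<in>{a::'k. qchar a = 1}. replicate_mset n (g (qchar a))) +
      (\<Sum>a\<in>{a::'k. qchar a = -1}. replicate_mset n (g (qchar a)))"
    by (simp add: sum.union_disjoint disjoint_iff)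
  also have "\<dots> = (\<Sum>a\<in>{a::'k. qchar a = 1}. replicate_mset n (g 1)) +
      (\<Sum>a\<in>{a::'k. qchar a = -1}. replicate_mset n (g (-1)))"
    by (intro arg_cong2[where f = "(+)"] sum.cong) simp_all
  also have "\<dots> = replicate_mset ((CARD('k) - 1) div 2 * n) (g 1) +
      replicate_mset ((CARD('k) - 1) div 2 * n) (g (-1))"
    using card_qchar_eq[OF two_neq_zero] by (simp add: sum_replicate_mset)
  finally show ?thesis .
qed

end

section \<open>The code\<close>

lemma vector_space_pointwise: "vector_space (\<lambda>(a::'k::field) (f::'i \<Rightarrow> 'k) z. a * f z)"
  by unfold_locales (simp_all add: fun_eq_iff algebra_simps)

locale quadratic_trace_code =
  quadratic_form e1 q m1 Q + ext2: trace_extension e2 q m2 m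
  for e1 :: "'k::{finite,field} \<Rightarrow> 'a::{finite,field}" and e2 :: "'k \<Rightarrow> 'b::{finite,field}"
    and q m1 m2 :: nat and Q :: "'a \<Rightarrow> 'k" and m :: nat +
  assumes Q_nonzero: "\<exists>x. Q x \<noteq> 0"
begin

definition codeword :: "'k \<Rightarrow> 'b \<Rightarrow> 'k \<Rightarrow> 'a \<times> 'b \<Rightarrow> 'k" where
  "codeword a b c = (\<lambda>(x, y). a * Q x + tr e2 q m2 (b * y) + c)"

lemma codeQ_eq_range: "codeQ e2 q m2 Q = range (\<lambda>(a, b, c). codeword a b c)"
proof
  show "codeQ e2 q m2 Q \<subseteq> range (\<lambda>(a, b, c). codeword a b c)"
  proof
    fix f assume "f \<in> codeQ e2 q m2 Q"
    then obtain a b c where "f = codeword a b c"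
      by (auto simp: codeQ_def codeword_def)
    then show "f \<in> range (\<lambda>(a, b, c). codeword a b c)"
      by (intro range_eqI[where x = "(a, b, c)"]) simp
  qed
qed (auto simp: codeQ_def codeword_def)

lemma inj_codeword: "inj (\<lambda>(a, b, c). codeword a b c)"
proof (rule injI)
  fix u u' :: "'k \<times> 'b \<times> 'k"
  obtain a b c a' b' c' where u: "u = (a, b, c)" and u': "u' = (a', b', c')"
    by (cases u, cases u') auto
  assume "(\<lambda>(a, b, c). codeword a b c) u = (\<lambda>(a, b, c). codeword a b c) u'"
  then have "codeword a b c = codeword a' b' c'"
    by (simp add: u u')
  then have values_eq: "a * Q x + tr e2 q m2 (b * y) + c = a' * Q x + tr e2 q m2 (b' * y) + c'" for x y
    by (auto simp: codeword_def dest: fun_cong[of _ _ "(x, y)"])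
  have "a = a' \<and> b = b' \<and> c = c'"
  proof (intro conjI)
    show c: "c = c'"
      using values_eq[of 0 0] by (simp add: ext2.trace_0)
    obtain x0 where "Q x0 \<noteq> 0"
      using Q_nonzero by blast
    then show "a = a'"
      using values_eq[of x0 0] c by (simp add: ext2.trace_0)
    show "b = b'"
    proof (rule ccontr)
      assume "b \<noteq> b'"
      obtain y0 where y0: "tr e2 q m2 y0 \<noteq> 0"
        using ext2.trace_nonzero by blast
      let ?y = "y0 / (b - b')"
      have "tr e2 q m2 (b * ?y) = tr e2 q m2 (b' * ?y)"
        using values_eq[of 0 ?y] c by simp
      then have "tr e2 q m2 (b * ?y - b' * ?y) = 0"
        by (simp only: ext2.trace_diff) simp
      moreover have "b * ?y - b' * ?y = (b - b') * ?y"
        by (simp only: left_diff_distrib)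
      moreover have "(b - b') * ?y = y0"
        using \<open>b \<noteq> b'\<close> by simp
      ultimately show False
        using y0 by simp
    qed
  qed
  then show "u = u'"
    by (simp add: u u')
qed

lemma card_codeQ: "card (codeQ e2 q m2 Q) = q ^ (m2 + 2)"
proof -
  have "card (codeQ e2 q m2 Q) = CARD('k \<times> 'b \<times> 'k)"
    unfolding codeQ_eq_range by (rule card_image[OF inj_codeword])
  then show ?thesis
    using card_base ext2.card_ext by (simp add: power_add power2_eq_square)
qed

lemma codeQ_subspace: "module.subspace (\<lambda>(a::'k) (f::'a \<times> 'b \<Rightarrow> 'k) z. a * f z) (codeQ e2 q m2 Q)"
proof -
  interpret fun_vs: vector_space "\<lambda>(a::'k) (f::'a \<times> 'b \<Rightarrow> 'k) z. a * f z"
    by (rule vector_space_pointwise)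
  have "codeword a b c + codeword a' b' c' = codeword (a + a') (b + b') (c + c')" for a b c a' b' c'
    by (auto simp: codeword_def fun_eq_iff algebra_simps ext2.trace_add[symmetric])
  moreover have "(\<lambda>z. k * codeword a b c z) = codeword (k * a) (e2 k * b) (k * c)" for k a b c
    by (auto simp: codeword_def fun_eq_iff algebra_simps ext2.trace_scale[symmetric])
  moreover have "0 = codeword 0 0 0"
    by (auto simp: codeword_def fun_eq_iff ext2.trace_0)
  ultimately show ?thesis
    unfolding fun_vs.subspace_def codeQ_eq_range by (auto simp: image_iff)
qed

lemma dim_codeQ:
  "vector_space.dim (\<lambda>(a::'k) (f::'a \<times> 'b \<Rightarrow> 'k) z. a * f z) (codeQ e2 q m2 Q) = m2 + 2"
proof -
  interpret fun_vs: vector_space "\<lambda>(a::'k) (f::'a \<times> 'b \<Rightarrow> 'k) z. a * f z"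
    by (rule vector_space_pointwise)
  show ?thesis
    using codeQ_subspace card_codeQ card_base by (intro fun_vs.dim_eq_of_card) (simp_all add: codeQ_eq_range)
qed

lemma value_count_codeword_const:
  "value_count (codeword 0 0 c) = (\<lambda>w. if w = c then real q ^ (m1 + m2) else 0)"
proof -
  have "{z. codeword 0 0 c z = w} = (if w = c then UNIV else {})" for w
    by (auto simp: codeword_def ext2.trace_0)
  then show ?thesis
    using card_ext ext2.card_ext by (auto simp: value_count_def power_add)
qed

lemma value_count_codeword_trace:
  assumes "b \<noteq> 0"
  shows "value_count (codeword a b c) = (\<lambda>w. real q ^ (m1 + m2 - 1))"
proof
  fix w
  obtain y0 where y0: "tr e2 q m2 y0 \<noteq> 0"
    using ext2.trace_nonzero by blast
  have fibre: "card {y. tr e2 q m2 (b * y) = s} = q ^ (m2 - 1)" for s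
  proof (rule ext2.card_fibre_linear_functional[where u = "y0 / b"])
    show "tr e2 q m2 (b * (x + y)) = tr e2 q m2 (b * x) + tr e2 q m2 (b * y)" for x y
      by (simp add: distrib_left ext2.trace_add)
    show "tr e2 q m2 (b * (e2 k * y)) = k * tr e2 q m2 (b * y)" for k y
      by (metis mult.left_commute ext2.trace_scale)
    show "tr e2 q m2 (b * (y0 / b)) \<noteq> 0"
      using assms y0 by simp
  qed
  have "{z. codeword a b c z = w} = (SIGMA x:UNIV. {y. tr e2 q m2 (b * y) = w - a * Q x - c})"
    by (auto simp: codeword_def algebra_simps)
  then have "card {z. codeword a b c z = w} = q ^ m1 * q ^ (m2 - 1)"
    using card_ext by (simp add: fibre)
  then show "value_count (codeword a b c) w = real q ^ (m1 + m2 - 1)"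
    using ext2.ext_degree_pos by (simp add: value_count_def power_add[symmetric])
qed

lemma value_count_codeword_quadratic:
  assumes "a \<noteq> 0"
  shows "value_count (codeword a 0 c) w = real q ^ m2 * real (card {x. Q x = (w - c) / a})"
proof -
  have "{z. codeword a 0 c z = w} = {x. Q x = (w - c) / a} \<times> UNIV"
    using assms by (auto simp: codeword_def ext2.trace_0 field_simps)
  then show ?thesis
    using ext2.card_ext by (simp add: value_count_def card_cartesian_product)
qed

lemma card_nonzero_scalars: "card (UNIV - {0::'k}) = q - 1"
  using card_base by (simp add: card_Diff_singleton)

lemma cwe_codeQ_decomposition:
  "cwe (codeQ e2 q m2 Q) = (\<Sum>i\<in>UNIV. {#(\<lambda>w. if w = i then real q ^ (m1 + m2) else 0)#})
     + replicate_mset (q^2 * (q^m2 - 1)) (\<lambda>w. real q ^ (m1 + m2 - 1))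
     + (\<Sum>c\<in>UNIV. \<Sum>a\<in>UNIV - {0}. {#value_count (codeword a 0 c)#})"
proof -
  let ?vc = "\<lambda>(a, b, c). value_count (codeword a b c)"
  have "cwe (codeQ e2 q m2 Q) = (\<Sum>u\<in>UNIV. {#?vc u#})"
    unfolding codeQ_eq_range using cwe_range_inj[OF inj_codeword] by (simp add: case_prod_beta)
  also have "\<dots> = (\<Sum>c\<in>UNIV. {#?vc (0, 0, c)#}) + (\<Sum>u\<in>{u. fst (snd u) \<noteq> 0}. {#?vc u#}) +
      (\<Sum>c\<in>UNIV. \<Sum>a\<in>UNIV - {0}. {#?vc (a, 0, c)#})"
    by (rule sum_split_parameters)
  also have "(\<Sum>u\<in>{u::'k \<times> 'b \<times> 'k. fst (snd u) \<noteq> 0}. {#?vc u#}) =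
      replicate_mset (card {u::'k \<times> 'b \<times> 'k. fst (snd u) \<noteq> 0}) (\<lambda>w. real q ^ (m1 + m2 - 1))"
    by (rule sum_singleton_mset_const) (auto simp: value_count_codeword_trace)
  also have "card {u::'k \<times> 'b \<times> 'k. fst (snd u) \<noteq> 0} = q^2 * (q^m2 - 1)"
  proof -
    have "{u::'k \<times> 'b \<times> 'k. fst (snd u) \<noteq> 0} = UNIV \<times> (UNIV - {0}) \<times> UNIV"
      by auto
    then show ?thesis
      using card_base ext2.card_ext
      by (simp add: card_cartesian_product card_Diff_singleton power2_eq_square mult_ac)
  qed
  finally show ?thesis
    by (simp add: value_count_codeword_const)
qed

lemma image_cwe_constant_words:
  "image_mset (\<lambda>v. real q ^ (m1 + m2) - v 0) (\<Sum>i\<in>(UNIV::'k set). {#(\<lambda>w. if w = i then real q ^ (m1 + m2) else 0)#})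
     = {#0#} + replicate_mset (q - 1) (real q ^ (m1 + m2))"
proof -
  let ?f = "\<lambda>i::'k. real q ^ (m1 + m2) - (if i = 0 then real q ^ (m1 + m2) else 0)"
  have "image_mset (\<lambda>v. real q ^ (m1 + m2) - v 0) (\<Sum>i\<in>(UNIV::'k set). {#(\<lambda>w. if w = i then real q ^ (m1 + m2) else 0)#})
      = (\<Sum>i\<in>UNIV. {#?f i#})"
    by (simp add: image_mset_sum eq_commute[of 0])
  also have "\<dots> = {#?f 0#} + (\<Sum>i\<in>UNIV - {0}. {#?f i#})"
    by (rule sum.remove) simp_all
  also have "(\<Sum>i\<in>UNIV - {0}. {#?f i#}) = replicate_mset (q - 1) (real q ^ (m1 + m2))"
    using sum_singleton_mset_const[of "UNIV - {0::'k}" ?f] card_nonzero_scalars by simp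
  finally show ?thesis
    by simp
qed

lemma value_count_codeword_even_rank:
  assumes "even (qf_rank e1 m1 Q)" and "a \<noteq> 0"
  shows "value_count (codeword a 0 c) = (\<lambda>w. if w = c
      then real q ^ (m1 + m2 - 1) * (1 + of_int qf_sign * (real q - 1) * real q powr (- real (qf_rank e1 m1 Q) / 2))
      else real q ^ (m1 + m2 - 1) * (1 - of_int qf_sign * real q powr (- real (qf_rank e1 m1 Q) / 2)))"
proof
  fix w
  have "m2 + (m1 - 1) = m1 + m2 - 1"
    using ext_degree_pos by simp
  then have "real q ^ m2 * real q ^ (m1 - 1) = real q ^ (m1 + m2 - 1)"
    by (simp only: power_add[symmetric])
  then show "value_count (codeword a 0 c) w = (if w = c
      then real q ^ (m1 + m2 - 1) * (1 + of_int qf_sign * (real q - 1) * real q powr (- real (qf_rank e1 m1 Q) / 2))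
      else real q ^ (m1 + m2 - 1) * (1 - of_int qf_sign * real q powr (- real (qf_rank e1 m1 Q) / 2)))"
    using assms(2)
    by (simp add: value_count_codeword_quadratic card_level_set_even_rank[OF assms(1)] mult.assoc[symmetric])
qed

lemma real_card_domain: "real CARD('a \<times> 'b) = real q ^ (m1 + m2)"
  using card_ext ext2.card_ext by (simp add: power_add)

lemma power_code_length: "real q ^ (m1 + m2) = real q ^ (m1 + m2 - 1) * real q"
  using ext_degree_pos by (simp flip: power_Suc2)

lemma cwe_codeQ_even_rank:
  assumes "even (qf_rank e1 m1 Q)"
  shows "cwe (codeQ e2 q m2 Q) = (\<Sum>i\<in>UNIV. {#(\<lambda>w. if w = i then real q ^ (m1 + m2) else 0)#})
     + replicate_mset (q^2 * (q^m2 - 1)) (\<lambda>w. real q ^ (m1 + m2 - 1))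
     + (\<Sum>i\<in>UNIV. replicate_mset (q - 1) (\<lambda>w. if w = i
         then real q ^ (m1 + m2 - 1) * (1 + of_int qf_sign * (real q - 1) * real q powr (- real (qf_rank e1 m1 Q) / 2))
         else real q ^ (m1 + m2 - 1) * (1 - of_int qf_sign * real q powr (- real (qf_rank e1 m1 Q) / 2))))"
proof -
  have "(\<Sum>a\<in>UNIV - {0}. {#value_count (codeword a 0 c)#}) = replicate_mset (q - 1) (\<lambda>w. if w = c
         then real q ^ (m1 + m2 - 1) * (1 + of_int qf_sign * (real q - 1) * real q powr (- real (qf_rank e1 m1 Q) / 2))
         else real q ^ (m1 + m2 - 1) * (1 - of_int qf_sign * real q powr (- real (qf_rank e1 m1 Q) / 2)))" for c
    by (subst sum_singleton_mset_const) (simp_all add: value_count_codeword_even_rank[OF assms] card_nonzero_scalars)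
  then show ?thesis
    unfolding cwe_codeQ_decomposition by simp
qed

lemma wdist_codeQ_even_rank:
  assumes "even (qf_rank e1 m1 Q)"
  defines "\<epsilon> \<equiv> real_of_int qf_sign" and "pw \<equiv> real q powr (- real (qf_rank e1 m1 Q) / 2)"
  shows "wdist (codeQ e2 q m2 Q) = {#0#}
      + replicate_mset (q - 1) (real q ^ (m1 + m2))
      + replicate_mset (q^2 * (q^m2 - 1)) (real q ^ (m1 + m2 - 1) * (real q - 1))
      + replicate_mset (q - 1) (real q ^ (m1 + m2 - 1) * (real q - 1) * (1 - \<epsilon> * pw))
      + replicate_mset ((q - 1)^2) (real q ^ (m1 + m2 - 1) * (real q - 1 + \<epsilon> * pw))"
proof -
  let ?N = "real q ^ (m1 + m2 - 1)"
  let ?\<phi> = "\<lambda>v::'k \<Rightarrow> real. real q ^ (m1 + m2) - v 0"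
  let ?P = "\<lambda>i w. if w = i then ?N * (1 + \<epsilon> * (real q - 1) * pw) else ?N * (1 - \<epsilon> * pw)"
  have "image_mset ?\<phi> (\<Sum>i\<in>UNIV. replicate_mset (q - 1) (?P i)) =
      (\<Sum>i\<in>UNIV. replicate_mset (q - 1) (?\<phi> (?P i)))"
    by (simp add: image_mset_sum)
  also have "\<dots> = replicate_mset (q - 1) (?\<phi> (?P 0)) + (\<Sum>i\<in>UNIV - {0}. replicate_mset (q - 1) (?\<phi> (?P i)))"
    by (rule sum.remove) simp_all
  also have "(\<Sum>i\<in>UNIV - {0}. replicate_mset (q - 1) (?\<phi> (?P i))) =
      (\<Sum>i\<in>UNIV - {0::'k}. replicate_mset (q - 1) (?N * (real q - 1 + \<epsilon> * pw)))"
    using power_code_length by (intro sum.cong refl) (simp add: algebra_simps)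
  also have "\<dots> = replicate_mset ((q - 1)^2) (?N * (real q - 1 + \<epsilon> * pw))"
    by (simp add: sum_replicate_mset card_nonzero_scalars power2_eq_square)
  also have "?\<phi> (?P 0) = ?N * (real q - 1) * (1 - \<epsilon> * pw)"
    using power_code_length by (simp add: algebra_simps)
  finally have third: "image_mset ?\<phi> (\<Sum>i\<in>UNIV. replicate_mset (q - 1) (?P i)) =
      replicate_mset (q - 1) (?N * (real q - 1) * (1 - \<epsilon> * pw)) +
      replicate_mset ((q - 1)^2) (?N * (real q - 1 + \<epsilon> * pw))" .
  have second: "?\<phi> (\<lambda>w. ?N) = ?N * (real q - 1)"
    using power_code_length by (simp add: algebra_simps)
  show ?thesis
    unfolding wdist_eq_image_cwe real_card_domain cwe_codeQ_even_rank[OF assms(1)]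
    using image_cwe_constant_words third second unfolding \<epsilon>_def pw_def by (simp add: add.assoc)
qed

lemma value_count_codeword_odd_rank:
  assumes "odd (qf_rank e1 m1 Q)" and "a \<noteq> 0"
  shows "value_count (codeword a 0 c) = (\<lambda>w. if w = c then real q ^ (m1 + m2 - 1)
      else real q ^ (m1 + m2 - 1) * (1 + of_int (qchar (-1::'k) * qf_sign) * of_int (qchar a) *
        real q powr ((1 - real (qf_rank e1 m1 Q)) / 2) * of_int (qchar (c - w))))"
proof
  fix w
  have "m2 + (m1 - 1) = m1 + m2 - 1"
    using ext_degree_pos by simp
  then have powers: "real q ^ m2 * real q ^ (m1 - 1) = real q ^ (m1 + m2 - 1)"
    by (simp only: power_add[symmetric])
  have "qchar ((w - c) / a) = qchar (w - c) * qchar a"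
    by (rule qchar_divide[OF two_neq_zero])
  also have "qchar (w - c) = qchar (-1::'k) * qchar (c - w)"
    by (metis minus_diff_eq mult_minus1 qchar_mult[OF two_neq_zero])
  finally show "value_count (codeword a 0 c) w = (if w = c then real q ^ (m1 + m2 - 1)
      else real q ^ (m1 + m2 - 1) * (1 + of_int (qchar (-1::'k) * qf_sign) * of_int (qchar a) *
        real q powr ((1 - real (qf_rank e1 m1 Q)) / 2) * of_int (qchar (c - w))))"
    using assms(2) powers
    by (simp add: value_count_codeword_quadratic card_level_set_odd_rank[OF assms(1)] mult.assoc[symmetric])
qed

(* Replacing epsilon by -epsilon swaps the two families of words, so any sign will do. *)

lemma cwe_codeQ_odd_rank:
  assumes "odd (qf_rank e1 m1 Q)" and "\<epsilon> = 1 \<or> \<epsilon> = -1"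
  defines "pw \<equiv> real q powr ((1 - real (qf_rank e1 m1 Q)) / 2)"
  shows "cwe (codeQ e2 q m2 Q) = (\<Sum>i\<in>UNIV. {#(\<lambda>w. if w = i then real q ^ (m1 + m2) else 0)#})
     + replicate_mset (q^2 * (q^m2 - 1)) (\<lambda>w. real q ^ (m1 + m2 - 1))
     + (\<Sum>i\<in>UNIV. replicate_mset ((q - 1) div 2) (\<lambda>w. if w = i then real q ^ (m1 + m2 - 1)
          else real q ^ (m1 + m2 - 1) * (1 + \<epsilon> * pw * of_int (qchar (i - w)))))
     + (\<Sum>i\<in>UNIV. replicate_mset ((q - 1) div 2) (\<lambda>w. if w = i then real q ^ (m1 + m2 - 1)
          else real q ^ (m1 + m2 - 1) * (1 - \<epsilon> * pw * of_int (qchar (i - w)))))"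
proof -
  define P where "P i s = (\<lambda>w. if w = i then real q ^ (m1 + m2 - 1)
      else real q ^ (m1 + m2 - 1) * (1 + s * pw * of_int (qchar (i - w))))" for i :: 'k and s :: real
  define \<delta> where "\<delta> = real_of_int (qchar (-1::'k) * qf_sign)"
  have \<delta>: "\<delta> = \<epsilon> \<or> \<delta> = - \<epsilon>"
    using assms(2) qf_sign_cases qchar_nonzero[of "-1::'k"] unfolding \<delta>_def by auto
  have "(\<Sum>a\<in>UNIV - {0}. {#value_count (codeword a 0 c)#}) =
      (\<Sum>a\<in>UNIV - {0::'k}. replicate_mset 1 (P c (\<delta> * of_int (qchar a))))" for c
    by (intro sum.cong refl)
      (simp add: value_count_codeword_odd_rank[OF assms(1)] P_def \<delta>_def pw_def mult_ac cong: if_cong)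
  also have "\<dots> c = replicate_mset ((q - 1) div 2) (P c \<delta>) + replicate_mset ((q - 1) div 2) (P c (- \<delta>))" for c
    using sum_replicate_mset_nonzero_qchar[OF two_neq_zero, of 1 "\<lambda>s. P c (\<delta> * of_int s)"] card_base
    by simp
  also have "\<dots> c = replicate_mset ((q - 1) div 2) (P c \<epsilon>) + replicate_mset ((q - 1) div 2) (P c (- \<epsilon>))" for c
    using \<delta> by (auto simp: add.commute)
  finally have "(\<Sum>c\<in>UNIV. \<Sum>a\<in>UNIV - {0}. {#value_count (codeword a 0 c)#}) =
      (\<Sum>c\<in>UNIV. replicate_mset ((q - 1) div 2) (P c \<epsilon>)) +
      (\<Sum>c\<in>UNIV. replicate_mset ((q - 1) div 2) (P c (- \<epsilon>)))"
    by (simp add: sum.distrib)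
  then show ?thesis
    unfolding cwe_codeQ_decomposition by (simp add: P_def add.assoc cong: if_cong)
qed

lemma image_mset_odd_profile:
  "image_mset (\<lambda>v. real q ^ (m1 + m2) - v 0) (\<Sum>i\<in>(UNIV::'k set). replicate_mset ((q - 1) div 2)
       (\<lambda>w. if w = i then real q ^ (m1 + m2 - 1) else real q ^ (m1 + m2 - 1) * (1 + t * of_int (qchar (i - w)))))
   = replicate_mset ((q - 1) div 2) (real q ^ (m1 + m2 - 1) * (real q - 1))
     + replicate_mset ((q - 1) div 2 * ((q - 1) div 2)) (real q ^ (m1 + m2 - 1) * (real q - 1 - t))
     + replicate_mset ((q - 1) div 2 * ((q - 1) div 2)) (real q ^ (m1 + m2 - 1) * (real q - 1 + t))"
proof -
  let ?h = "(q - 1) div 2" and ?N = "real q ^ (m1 + m2 - 1)"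
  let ?g = "\<lambda>i::'k. real q ^ (m1 + m2) - (if 0 = i then ?N else ?N * (1 + t * of_int (qchar (i - 0))))"
  have "image_mset (\<lambda>v. real q ^ (m1 + m2) - v 0) (\<Sum>i\<in>(UNIV::'k set). replicate_mset ?h
       (\<lambda>w. if w = i then ?N else ?N * (1 + t * of_int (qchar (i - w)))))
      = (\<Sum>i\<in>UNIV. replicate_mset ?h (?g i))"
    by (simp add: image_mset_sum)
  also have "\<dots> = replicate_mset ?h (?g 0) + (\<Sum>i\<in>UNIV - {0}. replicate_mset ?h (?g i))"
    by (rule sum.remove) simp_all
  also have "(\<Sum>i\<in>UNIV - {0}. replicate_mset ?h (?g i)) =
      (\<Sum>i\<in>UNIV - {0::'k}. replicate_mset ?h (?N * (real q - 1 - t * of_int (qchar i))))"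
    using power_code_length by (intro sum.cong refl) (simp add: algebra_simps)
  also have "\<dots> = replicate_mset (?h * ?h) (?N * (real q - 1 - t)) + replicate_mset (?h * ?h) (?N * (real q - 1 + t))"
    using sum_replicate_mset_nonzero_qchar[OF two_neq_zero, of ?h "\<lambda>s. ?N * (real q - 1 - t * of_int s)"]
      card_base by simp
  also have "?g 0 = ?N * (real q - 1)"
    using power_code_length by (simp add: algebra_simps)
  finally show ?thesis
    by (simp add: add.assoc)
qed

lemma wdist_codeQ_odd_rank:
  assumes "odd (qf_rank e1 m1 Q)" and "\<epsilon> = 1 \<or> \<epsilon> = -1"
  defines "pw \<equiv> real q powr ((1 - real (qf_rank e1 m1 Q)) / 2)"
  shows "wdist (codeQ e2 q m2 Q) = {#0#}
      + replicate_mset (q - 1) (real q ^ (m1 + m2))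
      + replicate_mset (q^2 * (q^m2 - 1) + (q - 1)) (real q ^ (m1 + m2 - 1) * (real q - 1))
      + replicate_mset ((q - 1)^2 div 2) (real q ^ (m1 + m2 - 1) * (real q - 1 - \<epsilon> * pw))
      + replicate_mset ((q - 1)^2 div 2) (real q ^ (m1 + m2 - 1) * (real q - 1 + \<epsilon> * pw))"
proof -
  let ?h = "(q - 1) div 2" and ?N = "real q ^ (m1 + m2 - 1)"
  let ?\<phi> = "\<lambda>v::'k \<Rightarrow> real. real q ^ (m1 + m2) - v 0"
  have "odd q"
    using card_qchar_eq(3)[OF two_neq_zero] card_base by simp
  then have counts: "q - 1 = ?h + ?h" "(q - 1)^2 div 2 = ?h * ?h + ?h * ?h"
    by (auto simp: power2_eq_square elim!: oddE)
  have plus: "image_mset ?\<phi> (\<Sum>i\<in>UNIV. replicate_mset ?h (\<lambda>w. if w = i then ?N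
      else ?N * (1 + \<epsilon> * pw * of_int (qchar (i - w))))) =
      replicate_mset ?h (?N * (real q - 1)) + replicate_mset (?h * ?h) (?N * (real q - 1 - \<epsilon> * pw))
      + replicate_mset (?h * ?h) (?N * (real q - 1 + \<epsilon> * pw))"
    by (rule image_mset_odd_profile)
  have minus: "image_mset ?\<phi> (\<Sum>i\<in>UNIV. replicate_mset ?h (\<lambda>w. if w = i then ?N
      else ?N * (1 - \<epsilon> * pw * of_int (qchar (i - w))))) =
      replicate_mset ?h (?N * (real q - 1)) + replicate_mset (?h * ?h) (?N * (real q - 1 + \<epsilon> * pw))
      + replicate_mset (?h * ?h) (?N * (real q - 1 - \<epsilon> * pw))"
    using image_mset_odd_profile[of "- (\<epsilon> * pw)"] by (simp add: cong: if_cong)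
  have second: "?\<phi> (\<lambda>w. ?N) = ?N * (real q - 1)"
    using power_code_length by (simp add: algebra_simps)
  have split1: "replicate_mset (q^2 * (q^m2 - 1) + (q - 1)) (?N * (real q - 1)) =
      replicate_mset (q^2 * (q^m2 - 1)) (?N * (real q - 1)) +
      replicate_mset ?h (?N * (real q - 1)) + replicate_mset ?h (?N * (real q - 1))"
    by (subst counts(1)) (simp only: replicate_mset_add add.assoc)
  have split2: "replicate_mset ((q - 1)^2 div 2) y = replicate_mset (?h * ?h) y + replicate_mset (?h * ?h) y" for y
    by (subst counts(2)) (rule replicate_mset_add)
  show ?thesis
    unfolding wdist_eq_image_cwe real_card_domain cwe_codeQ_odd_rank[OF assms(1,2)] pw_def[symmetric]
      split1 split2
    using image_cwe_constant_words plus minus second by (simp add: add_ac)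
qed

end

section \<open>The sign in the weight formulas\<close>

lemma odd_power_half_parity:
  assumes "odd (p::nat)"
  shows "even ((p ^ m - 1) div 2 + m * ((p - 1) div 2))"
proof (induction m)
  case (Suc m)
  obtain h where p: "p = 2 * h + 1"
    using assms by (rule oddE)
  have "odd (p ^ m)"
    using assms by simp
  then obtain A where A: "p ^ m = 2 * A + 1"
    by (rule oddE)
  have "p ^ Suc m = 2 * (2 * h * A + h + A) + 1"
    using p A by (simp add: algebra_simps)
  then have "(p ^ Suc m - 1) div 2 + Suc m * ((p - 1) div 2) = 2 * (h * A + h) + (A + m * h)"
    using p by (simp add: algebra_simps)
  with Suc.IH A p show ?case
    by simp
qed simp

context quadratic_form
begin

(* eta(-1) = (-1)^((q - 1) div 2), and (q - 1) div 2 has the parity of m (p - 1) div 2. *)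

lemma sgn_eps_even_rank:
  assumes "odd p" and "q = p ^ m" and "even (qf_rank e n Q)"
  shows "sgn_eps p m e n Q = qf_sign"
proof -
  obtain k where r: "qf_rank e n Q = 2 * k"
    using assms(3) by (rule evenE)
  obtain h where p: "p = 2 * h + 1"
    using assms(1) by (rule oddE)
  have "even ((p ^ m - 1) div 2 + m * h)"
    using odd_power_half_parity[OF assms(1), of m] p by simp
  then have "even (h * m * k) \<longleftrightarrow> even ((p ^ m - 1) div 2 * k)"
    by (auto simp: algebra_simps elim!: evenE)
  then have "(-1::int) ^ (h * m * k) = ((-1) ^ ((q - 1) div 2)) ^ k"
    using assms(2) by (simp add: minus_one_power_iff flip: power_mult)
  then show ?thesis
    unfolding sgn_eps_def qf_sign_def Let_def
    using assms(3) r p card_base qchar_minus_one[OF two_neq_zero] by (simp add: mult.commute)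
qed

lemma sgn_eps_cases: "sgn_eps p m e n Q = 1 \<or> sgn_eps p m e n Q = -1"
proof -
  obtain v lam where "independent_seq v n" and lam: "\<forall>i<qf_rank e n Q. lam i \<noteq> 0"
    and "\<And>x. Q (\<Sum>i<n. e (x i) * v i) = (\<Sum>i<qf_rank e n Q. lam i * x i ^ 2)"
    and eps: "qf_eps e n Q = qchar (\<Prod>i<qf_rank e n Q. lam i)"
    using qf_eps_diagonal by blast
  have "(\<Prod>i<qf_rank e n Q. lam i) \<noteq> 0"
    using lam by simp
  then have "qf_eps e n Q = 1 \<or> qf_eps e n Q = -1"
    unfolding eps by (rule qchar_nonzero)
  then show ?thesis
    unfolding sgn_eps_def Let_def by (auto simp: minus_one_power_iff)
qed

end

theorem theorem3:
  fixes p m m1 m2 q :: nat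
    and e1 :: "'k::{finite,field} \<Rightarrow> 'a::{finite,field}"
    and e2 :: "'k \<Rightarrow> 'b::{finite,field}"
    and Q :: "'a \<Rightarrow> 'k"
  assumes "prime p" and "odd p" and "m \<ge> 1" and "q = p ^ m"
    and "CARD('k) = q"
    and "m1 \<ge> 1" and "m2 \<ge> 1"
    and "CARD('a) = q ^ m1" and "CARD('b) = q ^ m2"
    and "field_emb e1" and "field_emb e2"
    and "quad_form e1 Q" and "\<exists>x. Q x \<noteq> 0"
  shows
    "let M = m1 + m2; r = qf_rank e1 m1 Q; \<epsilon> = real_of_int (sgn_eps p m e1 m1 Q);
         C = codeQ e2 q m2 Q; qr = real q
     in CARD('a \<times> 'b) = q ^ M \<and>
        module.subspace (\<lambda>(a::'k) (f::'a \<times> 'b \<Rightarrow> 'k) z. a * f z) C \<and>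
        vector_space.dim (\<lambda>(a::'k) (f::'a \<times> 'b \<Rightarrow> 'k) z. a * f z) C = m2 + 2 \<and>
        (even r \<longrightarrow>
           wdist C = {#0#}
              + replicate_mset (q - 1) (qr ^ M)
              + replicate_mset (q^2 * (q^m2 - 1)) (qr ^ (M - 1) * (qr - 1))
              + replicate_mset (q - 1) (qr ^ (M - 1) * (qr - 1) * (1 - \<epsilon> * qr powr (- real r / 2)))
              + replicate_mset ((q - 1)^2) (qr ^ (M - 1) * (qr - 1 + \<epsilon> * qr powr (- real r / 2)))
         \<and> cwe C = (\<Sum>i\<in>UNIV. {# (\<lambda>w. if w = i then qr ^ M else 0) #})
              + replicate_mset (q^2 * (q^m2 - 1)) (\<lambda>w. qr ^ (M - 1))
              + (\<Sum>i\<in>UNIV. replicate_mset (q - 1)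
                   (\<lambda>w. if w = i then qr ^ (M - 1) * (1 + \<epsilon> * (qr - 1) * qr powr (- real r / 2))
                        else qr ^ (M - 1) * (1 - \<epsilon> * qr powr (- real r / 2))))) \<and>
        (odd r \<longrightarrow>
           wdist C = {#0#}
              + replicate_mset (q - 1) (qr ^ M)
              + replicate_mset (q^2 * (q^m2 - 1) + (q - 1)) (qr ^ (M - 1) * (qr - 1))
              + replicate_mset ((q - 1)^2 div 2) (qr ^ (M - 1) * (qr - 1 - \<epsilon> * qr powr ((1 - real r) / 2)))
              + replicate_mset ((q - 1)^2 div 2) (qr ^ (M - 1) * (qr - 1 + \<epsilon> * qr powr ((1 - real r) / 2)))
         \<and> cwe C = (\<Sum>i\<in>UNIV. {# (\<lambda>w. if w = i then qr ^ M else 0) #})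
              + replicate_mset (q^2 * (q^m2 - 1)) (\<lambda>w. qr ^ (M - 1))
              + (\<Sum>i\<in>UNIV. replicate_mset ((q - 1) div 2)
                   (\<lambda>w. if w = i then qr ^ (M - 1)
                        else qr ^ (M - 1) * (1 + \<epsilon> * qr powr ((1 - real r) / 2) * real_of_int (qchar (i - w)))))
              + (\<Sum>i\<in>UNIV. replicate_mset ((q - 1) div 2)
                   (\<lambda>w. if w = i then qr ^ (M - 1)
                        else qr ^ (M - 1) * (1 - \<epsilon> * qr powr ((1 - real r) / 2) * real_of_int (qchar (i - w))))))"
proof -
  have "CHAR('k) = p"
    using assms by (intro CHAR_finite_field) simp_all
  then have "(2::'k) \<noteq> 0"
    using assms(2) by (intro two_neq_zero_if_odd_CHAR) simp
  then interpret quadratic_trace_code e1 e2 q m1 m2 Q m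
    using assms \<open>CHAR('k) = p\<close> by unfold_locales simp_all
  have sign: "real_of_int (sgn_eps p m e1 m1 Q) = 1 \<or> real_of_int (sgn_eps p m e1 m1 Q) = -1"
    using sgn_eps_cases by (metis of_int_1 of_int_minus)
  show ?thesis
    unfolding Let_def
    using assms(8,9) codeQ_subspace dim_codeQ
      wdist_codeQ_even_rank cwe_codeQ_even_rank sgn_eps_even_rank[OF assms(2,4)]
      wdist_codeQ_odd_rank[OF _ sign] cwe_codeQ_odd_rank[OF _ sign]
    by (simp add: power_add cong: if_cong)
qed

end
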